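(* Consider an RBM with observed variables $X\in\{-1,1\}^n$ as in the context. Fix $\delta>0$, $\epsilon>0$, $\zeta>0$. Suppose that for every observed variable $u$ we are given a set $n(u)$ which is a subset of the MRF neighborhood of $u$ and contains every $i$ for which there is $T\subseteq[n]$ with $u,i\in T$ and $|\hat f(T)|\ge\zeta$. Suppose that we are given $M$ i.i.d. samples of $X$ from the RBM and run the regression procedure of the context at each $u$. There is an absolute constant $C>0$ such that if \[M\ge C\,\gamma^2\ln(8\cdot n\cdot 2^D/\delta)/\epsilon^2\quad\text{and}\quad \zeta\le\frac{\sqrt\epsilon}{D^d\sqrt{1+e^{2\gamma}}},\] then with probability at least $1-\delta$, for all observed variables $u$, \[\mathbb{E}\big[(\mathbb{P}(X_u=1|X_{[n]\setminus\{u\}})-\sigma(\hat w_u\cdot z_u))^2\big]\le\epsilon,\] where the expectation is over $X$ drawn from the marginal of the RBM (with $\hat w_u$ fixed) and $z_u$ is the feature vector of $X$ at $u$.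
   Context: RBM: $\mathbb{P}(X=x,Y=y)\propto\exp(x^TJy+h^Tx+g^Ty)$ over observed $X\in\{-1,1\}^n$ and latent $Y\in\{-1,1\}^m$; $d=\max_j|\{i:J_{i,j}\ne0\}|$. The marginal of $X$ is $\propto\exp(f(x))$, $f(x)=\sum_j\rho(J_j\cdot x+g_j)+h^Tx$, $\rho(t)=\log(e^t+e^{-t})$, $J_j$ the $j$-th column; $f=\sum_{T\subseteq[n]}\hat f(T)\chi_T$, $\chi_T(x)=\prod_{i\in T}x_i$. MRF neighborhood of $u$: all $i\ne u$ with $\hat f(T)\ne0$ for some $T\ni u,i$. $D$: maximum size of an MRF neighborhood; $\gamma=\max_u\sum_{T\ni u}|\hat f(T)|$. $\sigma(t)=1/(1+e^{-t})$. Regression at $u$: the feature vector is $z_u=(\chi_T(X))_{T\subseteq n(u)}\in\{-1,1\}^{2^{|n(u)|}}$ and the label is $y=X_u$. Given samples $(z^{(k)},y^{(k)})_{k=1}^M$ computed from the $M$ samples of $X$, let $\hat w_u\in\arg\min\{\frac1M\sum_{k=1}^M\ln(1+e^{-y^{(k)}(w\cdot z^{(k)})}) : w\in\mathbb{R}^{2^{|n(u)|}},\ \|w\|_1\le2\gamma\}$. *)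

theory Defs
  imports "HOL-Analysis.Analysis"
begin

text \<open>Observed variables are indexed by {0..<n}, latent ones by {0..<m}.
  A configuration is a real-valued function with values in {-1,1} on the index set
  and 0 outside (so the set of configurations is finite).\<close>

definition cube :: "nat \<Rightarrow> (nat \<Rightarrow> real) set" where
  "cube n = {x. (\<forall>i<n. x i \<in> {-1, 1}) \<and> (\<forall>i. n \<le> i \<longrightarrow> x i = 0)}"

definition chi :: "nat set \<Rightarrow> (nat \<Rightarrow> real) \<Rightarrow> real" where
  "chi T x = (\<Prod>i\<in>T. x i)"

definition rbm_weight ::
  "nat \<Rightarrow> nat \<Rightarrow> (nat \<Rightarrow> nat \<Rightarrow> real) \<Rightarrow> (nat \<Rightarrow> real) \<Rightarrow> (nat \<Rightarrow> real)
     \<Rightarrow> (nat \<Rightarrow> real) \<Rightarrow> (nat \<Rightarrow> real) \<Rightarrow> real" where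
  "rbm_weight n m J h g x y =
     exp ((\<Sum>i<n. \<Sum>j<m. x i * J i j * y j) + (\<Sum>i<n. h i * x i) + (\<Sum>j<m. g j * y j))"

definition rbm_Z :: "nat \<Rightarrow> nat \<Rightarrow> (nat \<Rightarrow> nat \<Rightarrow> real) \<Rightarrow> (nat \<Rightarrow> real) \<Rightarrow> (nat \<Rightarrow> real) \<Rightarrow> real" where
  "rbm_Z n m J h g = (\<Sum>x\<in>cube n. \<Sum>y\<in>cube m. rbm_weight n m J h g x y)"

definition rbm_marg ::
  "nat \<Rightarrow> nat \<Rightarrow> (nat \<Rightarrow> nat \<Rightarrow> real) \<Rightarrow> (nat \<Rightarrow> real) \<Rightarrow> (nat \<Rightarrow> real) \<Rightarrow> (nat \<Rightarrow> real) \<Rightarrow> real" where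
  "rbm_marg n m J h g x = (\<Sum>y\<in>cube m. rbm_weight n m J h g x y) / rbm_Z n m J h g"

definition rbm_cond ::
  "nat \<Rightarrow> nat \<Rightarrow> (nat \<Rightarrow> nat \<Rightarrow> real) \<Rightarrow> (nat \<Rightarrow> real) \<Rightarrow> (nat \<Rightarrow> real) \<Rightarrow> nat \<Rightarrow> (nat \<Rightarrow> real) \<Rightarrow> real" where
  "rbm_cond n m J h g u x =
     rbm_marg n m J h g (x(u := 1)) /
       (rbm_marg n m J h g (x(u := 1)) + rbm_marg n m J h g (x(u := -1)))"

definition rho :: "real \<Rightarrow> real" where
  "rho t = ln (exp t + exp (- t))"

definition sigmoid :: "real \<Rightarrow> real" where
  "sigmoid t = 1 / (1 + exp (- t))"

definition rbm_f ::
  "nat \<Rightarrow> nat \<Rightarrow> (nat \<Rightarrow> nat \<Rightarrow> real) \<Rightarrow> (nat \<Rightarrow> real) \<Rightarrow> (nat \<Rightarrow> real) \<Rightarrow> (nat \<Rightarrow> real) \<Rightarrow> real" where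
  "rbm_f n m J h g x = (\<Sum>j<m. rho ((\<Sum>i<n. J i j * x i) + g j)) + (\<Sum>i<n. h i * x i)"

definition fhat ::
  "nat \<Rightarrow> nat \<Rightarrow> (nat \<Rightarrow> nat \<Rightarrow> real) \<Rightarrow> (nat \<Rightarrow> real) \<Rightarrow> (nat \<Rightarrow> real) \<Rightarrow> nat set \<Rightarrow> real" where
  "fhat n m J h g T = (\<Sum>x\<in>cube n. rbm_f n m J h g x * chi T x) / 2 ^ n"

definition mrf_nbhd ::
  "nat \<Rightarrow> nat \<Rightarrow> (nat \<Rightarrow> nat \<Rightarrow> real) \<Rightarrow> (nat \<Rightarrow> real) \<Rightarrow> (nat \<Rightarrow> real) \<Rightarrow> nat \<Rightarrow> nat set" where
  "mrf_nbhd n m J h g u =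
     {i. i < n \<and> i \<noteq> u \<and> (\<exists>T. T \<subseteq> {0..<n} \<and> u \<in> T \<and> i \<in> T \<and> fhat n m J h g T \<noteq> 0)}"

definition rbm_D ::
  "nat \<Rightarrow> nat \<Rightarrow> (nat \<Rightarrow> nat \<Rightarrow> real) \<Rightarrow> (nat \<Rightarrow> real) \<Rightarrow> (nat \<Rightarrow> real) \<Rightarrow> nat" where
  "rbm_D n m J h g = Max (insert 0 ((\<lambda>u. card (mrf_nbhd n m J h g u)) ` {0..<n}))"

definition rbm_gamma ::
  "nat \<Rightarrow> nat \<Rightarrow> (nat \<Rightarrow> nat \<Rightarrow> real) \<Rightarrow> (nat \<Rightarrow> real) \<Rightarrow> (nat \<Rightarrow> real) \<Rightarrow> real" where
  "rbm_gamma n m J h g =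
     Max (insert 0 ((\<lambda>u. \<Sum>T\<in>{T. T \<subseteq> {0..<n} \<and> u \<in> T}. \<bar>fhat n m J h g T\<bar>) ` {0..<n}))"

definition rbm_d :: "nat \<Rightarrow> nat \<Rightarrow> (nat \<Rightarrow> nat \<Rightarrow> real) \<Rightarrow> nat" where
  "rbm_d n m J = Max (insert 0 ((\<lambda>j. card {i. i < n \<and> J i j \<noteq> 0}) ` {0..<m}))"

text \<open>Inner product w . z_u(x) where z_u(x) = (chi_T(x))_{T subset of nu}.\<close>
definition feat_dot :: "nat set \<Rightarrow> (nat set \<Rightarrow> real) \<Rightarrow> (nat \<Rightarrow> real) \<Rightarrow> real" where
  "feat_dot nu w x = (\<Sum>T\<in>Pow nu. w T * chi T x)"

definition l1norm :: "nat set \<Rightarrow> (nat set \<Rightarrow> real) \<Rightarrow> real" where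
  "l1norm nu w = (\<Sum>T\<in>Pow nu. \<bar>w T\<bar>)"

definition logistic_loss ::
  "nat \<Rightarrow> (nat \<Rightarrow> nat \<Rightarrow> real) \<Rightarrow> nat \<Rightarrow> nat set \<Rightarrow> (nat set \<Rightarrow> real) \<Rightarrow> real" where
  "logistic_loss M s u nu w =
     (1 / real M) * (\<Sum>k<M. ln (1 + exp (- (s k u * feat_dot nu w (s k)))))"

end

theory Submission
  imports Defs "HOL-Probability.Hoeffding"
begin

text \<open>Fix an observed variable \<open>u\<close>. Its conditional law is \<open>\<sigma>(a(x))\<close>, where the logit
  \<open>a\<close> collects the Fourier coefficients \<open>fhat T\<close> with \<open>u \<in> T\<close>. Keeping only the sets with
  \<open>T - {u} \<subseteq> n(u)\<close> gives a weight vector \<open>w\<^sup>*\<close> of \<open>\<ell>\<^sub>1\<close>-norm at most \<open>2\<gamma>\<close>. Every omitted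
  coefficient is below \<open>\<zeta>\<close> by the hypothesis on \<open>n(u)\<close>, and at most \<open>D\<^sup>d\<close> of them are nonzero,
  because a coefficient of a set with two elements vanishes unless the set lies in the support
  of one hidden unit; so \<open>w\<^sup>*\<close> is within \<open>\<epsilon>/4\<close> of the Bayes-optimal expected logistic loss.
  The excess expected logistic loss dominates twice the squared error of the predicted
  probability (Pinsker), so it suffices that empirical and expected loss be uniformly
  \<open>\<epsilon>/2\<close>-close on the finitely many weight vectors that the estimator can output, together
  with \<open>w\<^sup>*\<close>. Symmetrization, the contraction principle (the logistic loss is 1-Lipschitz) and
  Massart's lemma for the \<open>\<ell>\<^sub>1\<close>-ball bound the probability of a deviation by
  \<open>2 \<cdot> 2\<^bsup>|n(u)|\<^esup> exp(-\<epsilon>\<^sup>2 M / (128 \<gamma>\<^sup>2))\<close>; a union bound over \<open>u\<close> and the two signs of the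
  deviation gives the theorem with \<open>C = 128\<close>.\<close>

section \<open>Samples from a finite distribution\<close>

abbreviation samples :: "nat \<Rightarrow> 'a set \<Rightarrow> (nat \<Rightarrow> 'a) set" where
  "samples M \<Omega> \<equiv> PiE {..<M} (\<lambda>_. \<Omega>)"

abbreviation signs :: "nat \<Rightarrow> (nat \<Rightarrow> real) set" where
  "signs M \<equiv> samples M {-1, 1}"

definition sample_prob :: "('a \<Rightarrow> real) \<Rightarrow> nat \<Rightarrow> (nat \<Rightarrow> 'a) \<Rightarrow> real" where
  "sample_prob p M s = (\<Prod>k<M. p (s k))"

lemma sum_samples_prod:
  assumes "finite \<Omega>"
  shows "(\<Sum>s\<in>samples M \<Omega>. \<Prod>k<M. f k (s k)) = (\<Prod>k<M. \<Sum>x\<in>\<Omega>. (f k x :: real))"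
  using prod_sum_PiE[of "{..<M}" "\<lambda>_. \<Omega>" f] assms by simp

lemma sum_samples_Suc:
  "(\<Sum>s\<in>samples (Suc M) A. F s) = (\<Sum>a\<in>A. \<Sum>s\<in>samples M A. F (s(M := a)))"
  unfolding sum.cartesian_product
  by (rule sum.reindex_bij_witness[where i="\<lambda>(a, s). s(M := a)" and j="\<lambda>s. (s M, s(M := undefined))"])
     (auto simp: PiE_def extensional_def fun_eq_iff Pi_iff less_Suc_eq)

lemma card_signs: "card (signs M) = 2 ^ M"
  by (simp add: card_PiE numeral_2_eq_2)

lemma sum_signs_uminus:
  "(\<Sum>\<sigma>\<in>signs M. F (\<lambda>k\<in>{..<M}. - \<sigma> k)) = (\<Sum>\<sigma>\<in>signs M. F \<sigma>)"
  by (rule sum.reindex_bij_witness[of _ "\<lambda>\<sigma>. \<lambda>k\<in>{..<M}. - \<sigma> k" "\<lambda>\<sigma>. \<lambda>k\<in>{..<M}. - \<sigma> k"])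
     (auto simp: PiE_def extensional_def fun_eq_iff)

lemma Max_image_attained:
  assumes "finite W" "W \<noteq> {}"
  obtains w where "w \<in> W" "(MAX v\<in>W. f v) = f w"
proof -
  have "(MAX v\<in>W. f v) \<in> f ` W" using assms by (intro Max_in) auto
  then show ?thesis using that by auto
qed

lemma Max_image_ge: "finite W \<Longrightarrow> w \<in> W \<Longrightarrow> f w \<le> (MAX v\<in>W. f v)"
  by (intro Max_ge) auto

lemma Max_image_mult:
  fixes c :: real
  assumes "finite W" "W \<noteq> {}" "c \<ge> 0"
  shows "(MAX w\<in>W. c * f w) = c * (MAX w\<in>W. f w)"
  using mono_Max_commute[OF Rings.mono_mult[OF assms(3)], of "f ` W"] assms(1,2) by (simp add: image_image)

lemma Max_image_add_le:
  fixes f g :: "'w \<Rightarrow> real"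
  assumes "finite W" "W \<noteq> {}"
  shows "(MAX w\<in>W. f w + g w) \<le> (MAX w\<in>W. f w) + (MAX w\<in>W. g w)"
proof -
  obtain w where w: "w \<in> W" and max: "(MAX w\<in>W. f w + g w) = f w + g w"
    using Max_image_attained[OF assms] by blast
  show ?thesis unfolding max by (intro add_mono Max_image_ge[OF assms(1) w])
qed

lemma exp_sum_weighted_le:
  fixes q f :: "'a \<Rightarrow> real"
  assumes "finite S" "\<And>x. x \<in> S \<Longrightarrow> 0 \<le> q x" "(\<Sum>x\<in>S. q x) = 1"
  shows "exp (\<Sum>x\<in>S. q x * f x) \<le> (\<Sum>x\<in>S. q x * exp (f x))"
proof -
  have "convex_on UNIV exp" using convex_on_exp[of 1] by simp
  moreover have "S \<noteq> {}" using assms(3) by auto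
  ultimately show ?thesis
    using convex_on_sum[of S UNIV exp q f] assms by simp
qed

lemma exp_add_le_mean_double: "exp (a + b) \<le> (exp (2 * a) + exp (2 * b)) / (2::real)"
proof -
  have "2 * (exp a * exp b) \<le> exp a ^ 2 + exp b ^ 2"
    using sum_squares_bound[of "exp a" "exp b"] by (simp add: power2_eq_square)
  then show ?thesis by (simp add: exp_add power2_eq_square flip: exp_add)
qed

lemma chernoff_bound:
  fixes q G :: "'s \<Rightarrow> real"
  assumes "\<And>s. s \<in> S \<Longrightarrow> 0 \<le> q s" and "\<And>s. s \<in> S \<Longrightarrow> P s \<Longrightarrow> t \<le> G s" and "lam \<ge> 0"
  shows "(\<Sum>s\<in>S. q s * (if P s then 1 else 0)) \<le> exp (- lam * t) * (\<Sum>s\<in>S. q s * exp (lam * G s))"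
proof -
  have "(if P s then 1 else 0) \<le> exp (- lam * t) * exp (lam * G s)" if "s \<in> S" for s
  proof (cases "P s")
    case True
    then have "0 \<le> - lam * t + lam * G s"
      using assms(2)[OF that] assms(3) by (simp add: mult_left_mono algebra_simps)
    then show ?thesis using True by (simp flip: exp_add)
  qed simp
  then have "(\<Sum>s\<in>S. q s * (if P s then 1 else 0)) \<le> (\<Sum>s\<in>S. q s * (exp (- lam * t) * exp (lam * G s)))"
    using assms(1) by (intro sum_mono mult_left_mono) auto
  then show ?thesis by (simp add: sum_distrib_left mult_ac)
qed

locale finite_prob =
  fixes \<Omega> :: "'a set" and p :: "'a \<Rightarrow> real"
  assumes finite_space: "finite \<Omega>"
    and prob_nonneg: "x \<in> \<Omega> \<Longrightarrow> 0 \<le> p x"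
    and sum_prob: "sum p \<Omega> = 1"
begin

lemma finite_samples: "finite (samples M \<Omega>)"
  using finite_space by (simp add: finite_PiE)

lemma sample_prob_nonneg: "s \<in> samples M \<Omega> \<Longrightarrow> 0 \<le> sample_prob p M s"
  unfolding sample_prob_def by (auto intro!: prod_nonneg prob_nonneg)

lemma sum_sample_prob: "(\<Sum>s\<in>samples M \<Omega>. sample_prob p M s) = 1"
  using sum_samples_prod[OF finite_space, of "\<lambda>_. p" M] sum_prob
  by (simp add: sample_prob_def)

lemma sum_sample_prob_coord:
  assumes "k < M"
  shows "(\<Sum>s\<in>samples M \<Omega>. sample_prob p M s * f (s k)) = (\<Sum>x\<in>\<Omega>. p x * f x)"
proof -
  define q where "q = (\<lambda>i x. if i = k then p x * f x else p x)"
  have split_k: "(\<Prod>i<M. F i) = F k * (\<Prod>i\<in>{..<M} - {k}. F i)" for F :: "nat \<Rightarrow> real"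
    using assms by (subst prod.remove[of _ k]) auto
  have "sample_prob p M s * f (s k) = (\<Prod>i<M. q i (s i))" for s
    unfolding sample_prob_def split_k[of "\<lambda>i. p (s i)"] split_k[of "\<lambda>i. q i (s i)"]
    by (simp add: q_def)
  then have "(\<Sum>s\<in>samples M \<Omega>. sample_prob p M s * f (s k)) = (\<Prod>i<M. \<Sum>x\<in>\<Omega>. q i x)"
    using sum_samples_prod[OF finite_space] by simp
  also have "\<dots> = (\<Sum>x\<in>\<Omega>. p x * f x)"
    unfolding split_k[of "\<lambda>i. \<Sum>x\<in>\<Omega>. q i x"] by (simp add: q_def sum_prob)
  finally show ?thesis .
qed

lemma sum_sample_prob_mean:
  assumes "M > 0"
  shows "(\<Sum>s\<in>samples M \<Omega>. sample_prob p M s * ((1 / real M) * (\<Sum>k<M. f (s k))))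
    = (\<Sum>x\<in>\<Omega>. p x * f x)"
proof -
  have "(\<Sum>s\<in>samples M \<Omega>. sample_prob p M s * ((1 / real M) * (\<Sum>k<M. f (s k))))
      = (1 / real M) * (\<Sum>k<M. \<Sum>s\<in>samples M \<Omega>. sample_prob p M s * f (s k))"
    by (simp add: sum_distrib_left sum.swap[of _ "samples M \<Omega>"] mult_ac)
  also have "\<dots> = (\<Sum>x\<in>\<Omega>. p x * f x)"
    using assms by (simp add: sum_sample_prob_coord)
  finally show ?thesis .
qed

lemma sum_sample_pair_fst:
  "(\<Sum>x\<in>samples M \<Omega> \<times> samples M \<Omega>. sample_prob p M (fst x) * sample_prob p M (snd x) * F (fst x))
    = (\<Sum>s\<in>samples M \<Omega>. sample_prob p M s * F s)"
  unfolding sum.cartesian_product' fst_conv snd_conv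
  by (simp add: mult.commute[of _ "F _"] mult.assoc flip: sum_distrib_left) (simp add: sum_sample_prob)

lemma sum_sample_pair_snd:
  "(\<Sum>x\<in>samples M \<Omega> \<times> samples M \<Omega>. sample_prob p M (fst x) * sample_prob p M (snd x) * F (snd x))
    = (\<Sum>s\<in>samples M \<Omega>. sample_prob p M s * F s)"
  unfolding sum.cartesian_product' fst_conv snd_conv mult.assoc
    sum_distrib_left[symmetric] sum_distrib_right[symmetric] sum_sample_prob
  by simp

end

section \<open>Rademacher averages\<close>

lemma cosh_le_exp_square: "(exp x + exp (- x)) / 2 \<le> exp (x\<^sup>2 / (2::real))"
proof -
  have nonneg: "(exp y + exp (- y)) / 2 \<le> exp (y\<^sup>2 / 2)" if "y \<ge> 0" for y :: real
  proof -
    have pos: "(exp y + exp (- y)) / 2 > 0" by (simp add: add_pos_pos)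
    have eq: "1 + (1/2) * (exp (2 * y) - 1) = exp y * ((exp y + exp (- y)) / 2)"
      by (simp add: field_simps exp_add[symmetric] exp_minus)
    have "ln (1 + (1/2) * (exp (2 * y) - 1)) = y + ln ((exp y + exp (- y)) / 2)"
      unfolding eq using pos ln_mult[of "exp y" "(exp y + exp (- y)) / 2"] by simp
    with Hoeffdings_lemma_aux[of "2 * y" "1/2"] that
    have "ln ((exp y + exp (- y)) / 2) \<le> y\<^sup>2 / 2"
      by (simp add: power2_eq_square)
    with pos show ?thesis by (metis exp_le_cancel_iff exp_ln)
  qed
  show ?thesis
    using nonneg[of x] nonneg[of "- x"] by (cases "x \<ge> 0") (simp_all add: add.commute)
qed

lemma rademacher_mgf_le:
  assumes "\<And>k. k < M \<Longrightarrow> \<bar>\<beta> k\<bar> \<le> 1"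
  shows "(\<Sum>\<sigma>\<in>signs M. exp (d * (\<Sum>k<M. \<sigma> k * \<beta> k))) \<le> 2 ^ M * exp (d\<^sup>2 * M / 2)"
proof -
  have "(\<Sum>\<sigma>\<in>signs M. exp (d * (\<Sum>k<M. \<sigma> k * \<beta> k)))
      = (\<Sum>\<sigma>\<in>signs M. \<Prod>k<M. exp (d * (\<sigma> k * \<beta> k)))"
    by (simp add: sum_distrib_left exp_sum)
  also have "\<dots> = (\<Prod>k<M. exp (d * \<beta> k) + exp (- (d * \<beta> k)))"
    by (subst sum_samples_prod) (simp_all add: add.commute)
  also have "\<dots> \<le> (\<Prod>k<M. 2 * exp (d\<^sup>2 / 2))"
  proof (rule prod_mono)
    fix k assume "k \<in> {..<M}"
    then have "(d * \<beta> k)\<^sup>2 \<le> d\<^sup>2"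
      using assms by (simp add: power_mult_distrib abs_square_le_1 mult_left_le)
    then have "exp ((d * \<beta> k)\<^sup>2 / 2) \<le> exp (d\<^sup>2 / 2)" by simp
    moreover have "exp (d * \<beta> k) + exp (- (d * \<beta> k)) \<le> 2 * exp ((d * \<beta> k)\<^sup>2 / 2)"
      using cosh_le_exp_square[of "d * \<beta> k"] by simp
    ultimately show "0 \<le> exp (d * \<beta> k) + exp (- (d * \<beta> k)) \<and>
        exp (d * \<beta> k) + exp (- (d * \<beta> k)) \<le> 2 * exp (d\<^sup>2 / 2)"
      by (intro conjI) (simp add: add_nonneg_nonneg, linarith)
  qed
  also have "\<dots> = 2 ^ M * exp (d\<^sup>2 * M / 2)"
    by (simp add: power_mult_distrib exp_of_nat_mult[symmetric] mult_ac)
  finally show ?thesis .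
qed

lemma sum_mult_le_l1_Max:
  fixes w y :: "'f \<Rightarrow> real"
  assumes "finite F" "F \<noteq> {}"
  shows "(\<Sum>T\<in>F. w T * y T) \<le> (\<Sum>T\<in>F. \<bar>w T\<bar>) * (MAX T\<in>F. \<bar>y T\<bar>)"
  unfolding sum_distrib_right
proof (rule sum_mono)
  fix T assume "T \<in> F"
  then have "\<bar>y T\<bar> \<le> (MAX T\<in>F. \<bar>y T\<bar>)" by (rule Max_image_ge[OF assms(1)])
  have "w T * y T \<le> \<bar>w T\<bar> * \<bar>y T\<bar>"
    by (simp flip: abs_mult)
  also have "\<dots> \<le> \<bar>w T\<bar> * (MAX T\<in>F. \<bar>y T\<bar>)"
    using \<open>\<bar>y T\<bar> \<le> _\<close> by (rule mult_left_mono) simp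
  finally show "w T * y T \<le> \<bar>w T\<bar> * (MAX T\<in>F. \<bar>y T\<bar>)" .
qed

text \<open>Massart's finite-class lemma for linear predictors with \<open>\<ell>\<^sub>1\<close>-bounded weights: the
  supremum is attained at a signed vertex of the \<open>\<ell>\<^sub>1\<close>-ball.\<close>

lemma rademacher_l1_mgf_le:
  fixes F :: "'f set" and b :: "'f \<Rightarrow> nat \<Rightarrow> real" and W :: "('f \<Rightarrow> real) set"
  assumes F: "finite F" "F \<noteq> {}" and W: "finite W" "W \<noteq> {}"
    and b: "\<And>T k. T \<in> F \<Longrightarrow> k < M \<Longrightarrow> \<bar>b T k\<bar> \<le> 1"
    and R: "\<And>w. w \<in> W \<Longrightarrow> (\<Sum>T\<in>F. \<bar>w T\<bar>) \<le> R" and c: "c \<ge> 0"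
  shows "(\<Sum>\<sigma>\<in>signs M. exp (c * (MAX w\<in>W. \<Sum>k<M. \<sigma> k * (\<Sum>T\<in>F. w T * b T k))))
     \<le> 2 ^ M * (2 * card F * exp (c\<^sup>2 * R\<^sup>2 * M / 2))"
proof -
  define B where "B \<sigma> T = (\<Sum>k<M. \<sigma> k * b T k)" for \<sigma> T
  have vertex: "exp (c * (MAX w\<in>W. \<Sum>k<M. \<sigma> k * (\<Sum>T\<in>F. w T * b T k)))
      \<le> (\<Sum>T\<in>F. exp (c * R * B \<sigma> T) + exp (- (c * R) * B \<sigma> T))" for \<sigma>
  proof -
    have swap: "(\<Sum>k<M. \<sigma> k * (\<Sum>T\<in>F. w T * b T k)) = (\<Sum>T\<in>F. w T * B \<sigma> T)" for w
      by (simp add: B_def sum_distrib_left sum.swap[of _ F] mult_ac)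
    obtain w where w: "w \<in> W"
      and w_max: "(MAX w\<in>W. \<Sum>k<M. \<sigma> k * (\<Sum>T\<in>F. w T * b T k)) = (\<Sum>T\<in>F. w T * B \<sigma> T)"
      using Max_image_attained[OF W] unfolding swap by blast
    obtain T0 where T0: "T0 \<in> F" and T0_max: "(MAX T\<in>F. \<bar>B \<sigma> T\<bar>) = \<bar>B \<sigma> T0\<bar>"
      using Max_image_attained[OF F] by blast
    have "(\<Sum>T\<in>F. w T * B \<sigma> T) \<le> (\<Sum>T\<in>F. \<bar>w T\<bar>) * \<bar>B \<sigma> T0\<bar>"
      unfolding T0_max[symmetric] by (rule sum_mult_le_l1_Max[OF F])
    also have "\<dots> \<le> R * \<bar>B \<sigma> T0\<bar>"
      using R[OF w] by (simp add: mult_right_mono)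
    finally have "c * (\<Sum>T\<in>F. w T * B \<sigma> T) \<le> c * R * \<bar>B \<sigma> T0\<bar>"
      using c by (simp add: mult_left_mono mult.assoc)
    then have "exp (c * (\<Sum>T\<in>F. w T * B \<sigma> T)) \<le> exp (c * R * \<bar>B \<sigma> T0\<bar>)"
      by simp
    also have "\<dots> \<le> exp (c * R * B \<sigma> T0) + exp (- (c * R) * B \<sigma> T0)"
      by (cases "B \<sigma> T0 \<ge> 0") (auto intro: add_increasing add_increasing2)
    also have "\<dots> \<le> (\<Sum>T\<in>F. exp (c * R * B \<sigma> T) + exp (- (c * R) * B \<sigma> T))"
      by (rule member_le_sum[OF T0 _ F(1)]) (auto intro: add_nonneg_nonneg)
    finally show ?thesis by (simp add: w_max)
  qed
  have "(\<Sum>\<sigma>\<in>signs M. exp (c * (MAX w\<in>W. \<Sum>k<M. \<sigma> k * (\<Sum>T\<in>F. w T * b T k))))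
      \<le> (\<Sum>T\<in>F. (\<Sum>\<sigma>\<in>signs M. exp (c * R * B \<sigma> T)) + (\<Sum>\<sigma>\<in>signs M. exp (- (c * R) * B \<sigma> T)))"
    using sum_mono[OF vertex] by (simp add: sum.swap[of _ F] sum.distrib)
  also have "\<dots> \<le> (\<Sum>T\<in>F. 2 ^ M * exp ((c * R)\<^sup>2 * M / 2) + 2 ^ M * exp ((- (c * R))\<^sup>2 * M / 2))"
    unfolding B_def using b by (intro sum_mono add_mono rademacher_mgf_le) auto
  also have "\<dots> = 2 ^ M * (2 * card F * exp (c\<^sup>2 * R\<^sup>2 * M / 2))"
    by (simp add: power_mult_distrib mult_ac)
  finally show ?thesis .
qed

text \<open>The Ledoux--Talagrand contraction principle for exponential moments, proved one sign at
  a time.\<close>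

lemma exp_increment_mono:
  fixes c x y d :: real
  assumes "c \<ge> 0" "x \<le> y" "d \<ge> 0"
  shows "exp (c * (x + d)) - exp (c * x) \<le> exp (c * (y + d)) - exp (c * y)"
proof -
  have "exp (c * (x + d)) - exp (c * x) = exp (c * x) * (exp (c * d) - 1)"
    by (simp add: distrib_left right_diff_distrib exp_add)
  also have "\<dots> \<le> exp (c * y) * (exp (c * d) - 1)"
    using assms by (intro mult_right_mono) (auto intro: mult_left_mono)
  also have "\<dots> = exp (c * (y + d)) - exp (c * y)"
    by (simp add: distrib_left right_diff_distrib exp_add)
  finally show ?thesis .
qed

lemma exp_sum_le_if_weakly_majorized:
  fixes c A B X Y :: real
  assumes c: "c \<ge> 0" and "A \<le> X" "B \<le> X" "A + B \<le> X + Y"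
  shows "exp (c * A) + exp (c * B) \<le> exp (c * X) + exp (c * Y)"
proof (cases "B \<le> Y")
  case True
  with assms show ?thesis by (intro add_mono) (simp_all add: mult_left_mono)
next
  case False
  have "exp (c * B) - exp (c * Y) \<le> exp (c * X) - exp (c * (X - (B - Y)))"
    using exp_increment_mono[of c Y "X - (B - Y)" "B - Y"] assms False by simp
  moreover have "exp (c * A) \<le> exp (c * (X - (B - Y)))"
    using assms by (simp add: mult_left_mono)
  ultimately show ?thesis by linarith
qed

lemma exp_contraction_pair:
  fixes c t1 t2 s1 s2 p q :: real
  assumes c: "c \<ge> 0" and lip: "\<bar>p - q\<bar> \<le> \<bar>t2 - s2\<bar>" and p: "\<bar>p\<bar> \<le> \<bar>t2\<bar>" and q: "\<bar>q\<bar> \<le> \<bar>s2\<bar>"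
    and max1: "s1 + q \<le> t1 + p" and max2: "t1 - p \<le> s1 - q"
  shows "exp (c * (t1 + p)) + exp (c * (s1 - q))
    \<le> max (exp (c * (t1 + t2)) + exp (c * (s1 - s2))) (exp (c * (s1 + s2)) + exp (c * (t1 - t2)))"
proof -
  have mono: "exp (c * x) \<le> exp (c * y)" if "x \<le> y" for x y
    using c that by (simp add: mult_left_mono)
  consider "0 \<le> s2" "s2 \<le> t2" | "0 \<le> t2" "t2 < s2" | "s2 \<le> 0" "t2 \<le> s2" | "t2 \<le> 0" "s2 < t2"
    | "0 \<le> t2" "s2 \<le> 0" | "t2 \<le> 0" "0 \<le> s2"
    by linarith
  then show ?thesis
  proof cases
    case 1
    have "exp (c * (t1 + p)) + exp (c * (s1 - q)) \<le> exp (c * (t1 + t2)) + exp (c * (s1 - s2))"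
      by (rule exp_sum_le_if_weakly_majorized[OF c])
         (use 1 lip p q max1 max2 in \<open>auto simp: abs_if split: if_splits\<close>)
    then show ?thesis by linarith
  next
    case 2
    have "exp (c * (t1 + p)) + exp (c * (s1 - q)) \<le> exp (c * (s1 + s2)) + exp (c * (t1 - t2))"
      by (rule exp_sum_le_if_weakly_majorized[OF c])
         (use 2 lip p q max1 max2 in \<open>auto simp: abs_if split: if_splits\<close>)
    then show ?thesis by linarith
  next
    case 3
    have "exp (c * (t1 + p)) + exp (c * (s1 - q)) \<le> exp (c * (t1 - t2)) + exp (c * (s1 + s2))"
      by (rule exp_sum_le_if_weakly_majorized[OF c])
         (use 3 lip p q max1 max2 in \<open>auto simp: abs_if split: if_splits\<close>)
    then show ?thesis by linarith
  next
    case 4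
    have "exp (c * (t1 + p)) + exp (c * (s1 - q)) \<le> exp (c * (s1 - s2)) + exp (c * (t1 + t2))"
      by (rule exp_sum_le_if_weakly_majorized[OF c])
         (use 4 lip p q max1 max2 in \<open>auto simp: abs_if split: if_splits\<close>)
    then show ?thesis by linarith
  next
    case 5
    with p q have "t1 + p \<le> t1 + t2" "s1 - q \<le> s1 - s2" by (auto simp: abs_if split: if_splits)
    from mono[OF this(1)] mono[OF this(2)] show ?thesis by linarith
  next
    case 6
    with p q have "t1 + p \<le> t1 - t2" "s1 - q \<le> s1 + s2" by (auto simp: abs_if split: if_splits)
    from mono[OF this(1)] mono[OF this(2)] show ?thesis by linarith
  qed
qed

lemma exp_Max_contraction_step:
  fixes r a :: "'w \<Rightarrow> real"
  assumes W: "finite W" "W \<noteq> {}" and c: "c \<ge> 0"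
    and lip: "\<And>x y. \<bar>\<phi> x - \<phi> y\<bar> \<le> \<bar>x - y\<bar>" and zero: "\<phi> 0 = 0"
  shows "exp (c * (MAX w\<in>W. r w + \<phi> (a w))) + exp (c * (MAX w\<in>W. r w - \<phi> (a w)))
       \<le> exp (c * (MAX w\<in>W. r w + a w)) + exp (c * (MAX w\<in>W. r w - a w))"
proof -
  obtain w1 where w1: "w1 \<in> W" "(MAX w\<in>W. r w + \<phi> (a w)) = r w1 + \<phi> (a w1)"
    using Max_image_attained[OF W] by blast
  obtain w2 where w2: "w2 \<in> W" "(MAX w\<in>W. r w - \<phi> (a w)) = r w2 - \<phi> (a w2)"
    using Max_image_attained[OF W] by blast
  have max1: "r w2 + \<phi> (a w2) \<le> r w1 + \<phi> (a w1)"
    using Max_image_ge[OF W(1) w2(1), of "\<lambda>w. r w + \<phi> (a w)"] w1 by simp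
  have max2: "r w1 - \<phi> (a w1) \<le> r w2 - \<phi> (a w2)"
    using Max_image_ge[OF W(1) w1(1), of "\<lambda>w. r w - \<phi> (a w)"] w2 by simp
  have "\<bar>\<phi> (a w)\<bar> \<le> \<bar>a w\<bar>" for w
    using lip[of "a w" 0] zero by simp
  then have "exp (c * (r w1 + \<phi> (a w1))) + exp (c * (r w2 - \<phi> (a w2)))
    \<le> max (exp (c * (r w1 + a w1)) + exp (c * (r w2 - a w2))) (exp (c * (r w2 + a w2)) + exp (c * (r w1 - a w1)))"
    by (intro exp_contraction_pair[OF c lip _ _ max1 max2])
  also have "\<dots> \<le> exp (c * (MAX w\<in>W. r w + a w)) + exp (c * (MAX w\<in>W. r w - a w))"
    using c by (intro max.boundedI add_mono w1(1) w2(1) Max_image_ge[OF W(1)]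
        exp_le_cancel_iff[THEN iffD2] mult_left_mono)
  finally show ?thesis using w1 w2 by simp
qed

lemma sum_signs_Suc_exp_Max:
  "(\<Sum>\<sigma>\<in>signs (Suc M). exp (c * (MAX w\<in>W. r w + (\<Sum>k<Suc M. \<sigma> k * g w k))))
    = (\<Sum>\<sigma>\<in>signs M. exp (c * (MAX w\<in>W. (r w + (\<Sum>k<M. \<sigma> k * g w k)) + g w M))
        + exp (c * (MAX w\<in>W. (r w + (\<Sum>k<M. \<sigma> k * g w k)) - g w M)))"
proof -
  have "(\<Sum>k<M. (\<sigma>(M := e)) k * g w k) = (\<Sum>k<M. \<sigma> k * g w k)" for \<sigma> e w
    by (intro sum.cong) auto
  then show ?thesis
    by (simp add: sum_samples_Suc sum.distrib algebra_simps)
qed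

lemma rademacher_contraction_exp:
  fixes \<phi> :: "nat \<Rightarrow> real \<Rightarrow> real" and a :: "'w \<Rightarrow> nat \<Rightarrow> real"
  assumes W: "finite W" "W \<noteq> {}" and c: "c \<ge> 0"
    and lip: "\<And>k x y. k < M \<Longrightarrow> \<bar>\<phi> k x - \<phi> k y\<bar> \<le> \<bar>x - y\<bar>" and zero: "\<And>k. k < M \<Longrightarrow> \<phi> k 0 = 0"
  shows "(\<Sum>\<sigma>\<in>signs M. exp (c * (MAX w\<in>W. r w + (\<Sum>k<M. \<sigma> k * \<phi> k (a w k)))))
       \<le> (\<Sum>\<sigma>\<in>signs M. exp (c * (MAX w\<in>W. r w + (\<Sum>k<M. \<sigma> k * a w k))))"
  using lip zero
proof (induction M arbitrary: r)
  case 0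
  show ?case by simp
next
  case (Suc M)
  have IH: "(\<Sum>\<sigma>\<in>signs M. exp (c * (MAX w\<in>W. r' w + (\<Sum>k<M. \<sigma> k * \<phi> k (a w k)))))
      \<le> (\<Sum>\<sigma>\<in>signs M. exp (c * (MAX w\<in>W. r' w + (\<Sum>k<M. \<sigma> k * a w k))))" for r'
    using Suc.prems by (intro Suc.IH) auto
  have "(\<Sum>\<sigma>\<in>signs (Suc M). exp (c * (MAX w\<in>W. r w + (\<Sum>k<Suc M. \<sigma> k * \<phi> k (a w k)))))
      = (\<Sum>\<sigma>\<in>signs M. exp (c * (MAX w\<in>W. (r w + \<phi> M (a w M)) + (\<Sum>k<M. \<sigma> k * \<phi> k (a w k)))))
        + (\<Sum>\<sigma>\<in>signs M. exp (c * (MAX w\<in>W. (r w - \<phi> M (a w M)) + (\<Sum>k<M. \<sigma> k * \<phi> k (a w k)))))"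
    unfolding sum_signs_Suc_exp_Max[where g="\<lambda>w k. \<phi> k (a w k)"] by (simp add: sum.distrib algebra_simps)
  also have "\<dots> \<le> (\<Sum>\<sigma>\<in>signs M. exp (c * (MAX w\<in>W. (r w + \<phi> M (a w M)) + (\<Sum>k<M. \<sigma> k * a w k))))
        + (\<Sum>\<sigma>\<in>signs M. exp (c * (MAX w\<in>W. (r w - \<phi> M (a w M)) + (\<Sum>k<M. \<sigma> k * a w k))))"
    by (intro add_mono IH)
  also have "\<dots> = (\<Sum>\<sigma>\<in>signs M. exp (c * (MAX w\<in>W. (r w + (\<Sum>k<M. \<sigma> k * a w k)) + \<phi> M (a w M)))
        + exp (c * (MAX w\<in>W. (r w + (\<Sum>k<M. \<sigma> k * a w k)) - \<phi> M (a w M))))"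
    by (simp add: sum.distrib algebra_simps)
  also have "\<dots> \<le> (\<Sum>\<sigma>\<in>signs M. exp (c * (MAX w\<in>W. (r w + (\<Sum>k<M. \<sigma> k * a w k)) + a w M))
        + exp (c * (MAX w\<in>W. (r w + (\<Sum>k<M. \<sigma> k * a w k)) - a w M)))"
    by (intro sum_mono exp_Max_contraction_step[OF W c]) (use Suc.prems in auto)
  also have "\<dots> = (\<Sum>\<sigma>\<in>signs (Suc M). exp (c * (MAX w\<in>W. r w + (\<Sum>k<Suc M. \<sigma> k * a w k))))"
    by (rule sum_signs_Suc_exp_Max[symmetric])
  finally show ?case .
qed

section \<open>Symmetrization\<close>

definition swap_coords :: "(nat \<Rightarrow> real) \<Rightarrow> (nat \<Rightarrow> 'a) \<times> (nat \<Rightarrow> 'a) \<Rightarrow> (nat \<Rightarrow> 'a) \<times> (nat \<Rightarrow> 'a)" where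
  "swap_coords \<sigma> x = ((\<lambda>k. if \<sigma> k = 1 then fst x k else snd x k), (\<lambda>k. if \<sigma> k = 1 then snd x k else fst x k))"

lemma swap_coords_swap_coords [simp]: "swap_coords \<sigma> (swap_coords \<sigma> x) = x"
  unfolding swap_coords_def by (cases x) auto

lemma swap_coords_in: "x \<in> PiE I A \<times> PiE I A \<Longrightarrow> swap_coords \<sigma> x \<in> PiE I A \<times> PiE I A"
  unfolding swap_coords_def by (cases x) (auto simp: PiE_def Pi_def extensional_def)

lemma exp_Max_swap_coords_le:
  fixes h :: "'w \<Rightarrow> 'a \<Rightarrow> real"
  assumes W: "finite W" "W \<noteq> {}" and lam: "lam \<ge> 0" and \<sigma>: "\<sigma> \<in> signs M"
  shows "exp (lam * (MAX w\<in>W. (1 / real M) *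
            (\<Sum>k<M. h w (snd (swap_coords \<sigma> x) k) - h w (fst (swap_coords \<sigma> x) k))))
    \<le> (exp (2 * lam * (MAX w\<in>W. (1 / real M) * (\<Sum>k<M. \<sigma> k * h w (snd x k))))
       + exp (2 * lam * (MAX w\<in>W. (1 / real M) * (\<Sum>k<M. - \<sigma> k * h w (fst x k))))) / 2"
    (is "exp (lam * ?D) \<le> (exp (2 * lam * ?A) + exp (2 * lam * ?B)) / 2")
proof -
  have "h w (snd (swap_coords \<sigma> x) k) - h w (fst (swap_coords \<sigma> x) k)
      = \<sigma> k * h w (snd x k) + - \<sigma> k * h w (fst x k)" if "k < M" for w k
  proof -
    have "\<sigma> k = 1 \<or> \<sigma> k = -1" using \<sigma> that by (auto simp: PiE_iff)
    then show ?thesis by (auto simp: swap_coords_def)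
  qed
  then have "(\<Sum>k<M. h w (snd (swap_coords \<sigma> x) k) - h w (fst (swap_coords \<sigma> x) k))
      = (\<Sum>k<M. \<sigma> k * h w (snd x k)) + (\<Sum>k<M. - \<sigma> k * h w (fst x k))" for w
    by (simp add: sum.distrib[symmetric])
  then have "?D = (MAX w\<in>W. (1 / real M) * (\<Sum>k<M. \<sigma> k * h w (snd x k))
                        + (1 / real M) * (\<Sum>k<M. - \<sigma> k * h w (fst x k)))"
    by (simp only: distrib_left)
  also have "\<dots> \<le> ?A + ?B"
    by (rule Max_image_add_le[OF W])
  finally have "lam * ?D \<le> lam * (?A + ?B)"
    using lam by (rule mult_left_mono)
  then have "exp (lam * ?D) \<le> exp (lam * ?A + lam * ?B)"
    by (simp only: distrib_left exp_le_cancel_iff)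
  also have "\<dots> \<le> (exp (2 * lam * ?A) + exp (2 * lam * ?B)) / 2"
    using exp_add_le_mean_double[of "lam * ?A" "lam * ?B"] by (simp add: mult.assoc)
  finally show ?thesis .
qed

context finite_prob
begin

lemma sum_sample_pair_swap_coords:
  "(\<Sum>x\<in>samples M \<Omega> \<times> samples M \<Omega>. sample_prob p M (fst x) * sample_prob p M (snd x) * G x)
    = (\<Sum>x\<in>samples M \<Omega> \<times> samples M \<Omega>. sample_prob p M (fst x) * sample_prob p M (snd x) * G (swap_coords \<sigma> x))"
proof -
  have "sample_prob p M (fst (swap_coords \<sigma> x)) * sample_prob p M (snd (swap_coords \<sigma> x))
      = sample_prob p M (fst x) * sample_prob p M (snd x)" for x
    unfolding sample_prob_def swap_coords_def prod.distrib[symmetric] by (intro prod.cong) auto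
  then show ?thesis
    by (intro sum.reindex_bij_witness[of _ "swap_coords \<sigma>" "swap_coords \<sigma>"]) (auto simp: swap_coords_in)
qed

lemma exp_sup_deviation_le_ghost_sample:
  fixes h :: "'w \<Rightarrow> 'a \<Rightarrow> real"
  assumes W: "finite W" "W \<noteq> {}" and M: "M > 0" and lam: "lam \<ge> 0" and s: "s \<in> samples M \<Omega>"
  shows "exp (lam * (MAX w\<in>W. (\<Sum>x\<in>\<Omega>. p x * h w x) - (1 / real M) * (\<Sum>k<M. h w (s k))))
    \<le> (\<Sum>s'\<in>samples M \<Omega>. sample_prob p M s' *
          exp (lam * (MAX w\<in>W. (1 / real M) * (\<Sum>k<M. h w (s' k) - h w (s k)))))"
proof -
  define D where "D s' = (MAX w\<in>W. (1 / real M) * (\<Sum>k<M. h w (s' k) - h w (s k)))" for s'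
  obtain w where w: "w \<in> W"
    and w_max: "(MAX w\<in>W. (\<Sum>x\<in>\<Omega>. p x * h w x) - (1 / real M) * (\<Sum>k<M. h w (s k)))
      = (\<Sum>x\<in>\<Omega>. p x * h w x) - (1 / real M) * (\<Sum>k<M. h w (s k))"
    using Max_image_attained[OF W] by blast
  have "(\<Sum>x\<in>\<Omega>. p x * h w x) - (1 / real M) * (\<Sum>k<M. h w (s k))
      = (\<Sum>s'\<in>samples M \<Omega>. sample_prob p M s' * ((1 / real M) * (\<Sum>k<M. h w (s' k))))
        - (\<Sum>s'\<in>samples M \<Omega>. sample_prob p M s') * ((1 / real M) * (\<Sum>k<M. h w (s k)))"
    using sum_sample_prob_mean[OF M, of "h w"] by (simp add: sum_sample_prob)
  also have "\<dots> = (\<Sum>s'\<in>samples M \<Omega>. sample_prob p M s' * ((1 / real M) * (\<Sum>k<M. h w (s' k) - h w (s k))))"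
    by (simp add: sum_subtractf right_diff_distrib sum_distrib_right sum_divide_distrib)
  also have "\<dots> \<le> (\<Sum>s'\<in>samples M \<Omega>. sample_prob p M s' * D s')"
    unfolding D_def by (intro sum_mono mult_left_mono sample_prob_nonneg Max_image_ge[OF W(1) w])
  finally have "lam * (MAX w\<in>W. (\<Sum>x\<in>\<Omega>. p x * h w x) - (1 / real M) * (\<Sum>k<M. h w (s k)))
      \<le> lam * (\<Sum>s'\<in>samples M \<Omega>. sample_prob p M s' * D s')"
    unfolding w_max using lam by (rule mult_left_mono)
  also have "\<dots> = (\<Sum>s'\<in>samples M \<Omega>. sample_prob p M s' * (lam * D s'))"
    by (simp add: sum_distrib_left mult_ac)
  finally have "exp (lam * (MAX w\<in>W. (\<Sum>x\<in>\<Omega>. p x * h w x) - (1 / real M) * (\<Sum>k<M. h w (s k))))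
      \<le> exp (\<Sum>s'\<in>samples M \<Omega>. sample_prob p M s' * (lam * D s'))"
    by simp
  also have "\<dots> \<le> (\<Sum>s'\<in>samples M \<Omega>. sample_prob p M s' * exp (lam * D s'))"
    by (intro exp_sum_weighted_le finite_samples sample_prob_nonneg sum_sample_prob)
  finally show ?thesis unfolding D_def .
qed

lemma symmetrization_exp:
  fixes h :: "'w \<Rightarrow> 'a \<Rightarrow> real"
  assumes W: "finite W" "W \<noteq> {}" and M: "M > 0" and lam: "lam \<ge> 0"
  shows "(\<Sum>s\<in>samples M \<Omega>. sample_prob p M s *
            exp (lam * (MAX w\<in>W. (\<Sum>x\<in>\<Omega>. p x * h w x) - (1 / real M) * (\<Sum>k<M. h w (s k)))))
     \<le> (1 / 2 ^ M) * (\<Sum>\<sigma>\<in>signs M. \<Sum>s\<in>samples M \<Omega>. sample_prob p M s *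
            exp (2 * lam * (MAX w\<in>W. (1 / real M) * (\<Sum>k<M. \<sigma> k * h w (s k)))))"
proof -
  define S where "S = samples M \<Omega>"
  define Q where "Q x = sample_prob p M (fst x) * sample_prob p M (snd x)" for x
  define D where "D x = (MAX w\<in>W. (1 / real M) * (\<Sum>k<M. h w (snd x k) - h w (fst x k)))" for x
  define A where "A \<sigma> s = (MAX w\<in>W. (1 / real M) * (\<Sum>k<M. \<sigma> k * h w (s k)))" for \<sigma> s
  have Q_nonneg: "x \<in> S \<times> S \<Longrightarrow> 0 \<le> Q x" for x
    unfolding Q_def S_def by (intro mult_nonneg_nonneg sample_prob_nonneg) (auto simp: mem_Times_iff)
  have "(\<Sum>s\<in>S. sample_prob p M s *
            exp (lam * (MAX w\<in>W. (\<Sum>x\<in>\<Omega>. p x * h w x) - (1 / real M) * (\<Sum>k<M. h w (s k)))))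
      \<le> (\<Sum>s\<in>S. sample_prob p M s * (\<Sum>s'\<in>S. sample_prob p M s' * exp (lam * D (s, s'))))"
    unfolding S_def D_def fst_conv snd_conv
    by (intro sum_mono mult_left_mono sample_prob_nonneg exp_sup_deviation_le_ghost_sample[OF W M lam])
  also have "\<dots> = (\<Sum>x\<in>S \<times> S. Q x * exp (lam * D x))"
    by (simp add: Q_def sum.cartesian_product sum_distrib_left mult.assoc split_beta)
  also have "\<dots> = (1 / 2 ^ M) * (\<Sum>\<sigma>\<in>signs M. \<Sum>x\<in>S \<times> S. Q x * exp (lam * D (swap_coords \<sigma> x)))"
    using sum_sample_pair_swap_coords[of M "\<lambda>x. exp (lam * D x)"]
    by (simp add: S_def Q_def card_signs mult.assoc)
  also have "\<dots> \<le> (1 / 2 ^ M) * (\<Sum>\<sigma>\<in>signs M. \<Sum>x\<in>S \<times> S.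
      Q x * ((exp (2 * lam * A \<sigma> (snd x)) + exp (2 * lam * A (\<lambda>k. - \<sigma> k) (fst x))) / 2))"
    unfolding D_def A_def
    by (intro mult_left_mono sum_mono Q_nonneg exp_Max_swap_coords_le[OF W lam]) simp_all
  also have "\<dots> = (1 / 2 ^ M) * (\<Sum>\<sigma>\<in>signs M. ((\<Sum>s\<in>S. sample_prob p M s * exp (2 * lam * A \<sigma> s))
      + (\<Sum>s\<in>S. sample_prob p M s * exp (2 * lam * A (\<lambda>k. - \<sigma> k) s))) / 2)"
  proof -
    have "(\<Sum>x\<in>S \<times> S. Q x * ((exp (2 * lam * A \<sigma> (snd x)) + exp (2 * lam * A (\<lambda>k. - \<sigma> k) (fst x))) / 2))
        = ((\<Sum>s\<in>S. sample_prob p M s * exp (2 * lam * A \<sigma> s))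
          + (\<Sum>s\<in>S. sample_prob p M s * exp (2 * lam * A (\<lambda>k. - \<sigma> k) s))) / 2" for \<sigma>
      using sum_sample_pair_snd[of M "\<lambda>s. exp (2 * lam * A \<sigma> s)"]
        sum_sample_pair_fst[of M "\<lambda>s. exp (2 * lam * A (\<lambda>k. - \<sigma> k) s)"]
      by (simp add: S_def Q_def sum.distrib add_divide_distrib distrib_left flip: sum_divide_distrib)
    then show ?thesis by (simp only:)
  qed
  also have "\<dots> = (1 / 2 ^ M) * (\<Sum>\<sigma>\<in>signs M. \<Sum>s\<in>S. sample_prob p M s * exp (2 * lam * A \<sigma> s))"
  proof -
    have "A (\<lambda>k. - \<sigma> k) = A (\<lambda>k\<in>{..<M}. - \<sigma> k)" for \<sigma>
      unfolding A_def by (intro ext arg_cong[where f=Max] image_cong refl arg_cong2[where f="(*)"] sum.cong) auto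
    then show ?thesis
      using sum_signs_uminus[of "\<lambda>\<sigma>. \<Sum>s\<in>S. sample_prob p M s * exp (2 * lam * A \<sigma> s)" M]
      by (simp add: sum.distrib flip: sum_divide_distrib)
  qed
  finally show ?thesis unfolding S_def A_def .
qed

lemma exp_sup_deviation_expectation_le:
  fixes W :: "('f \<Rightarrow> real) set" and b :: "'f \<Rightarrow> 'a \<Rightarrow> real" and \<phi> :: "'a \<Rightarrow> real \<Rightarrow> real"
  assumes W: "finite W" "W \<noteq> {}" and M: "M > 0" and F: "finite F" "F \<noteq> {}"
    and b: "\<And>T x. T \<in> F \<Longrightarrow> x \<in> \<Omega> \<Longrightarrow> \<bar>b T x\<bar> \<le> 1"
    and R: "\<And>w. w \<in> W \<Longrightarrow> (\<Sum>T\<in>F. \<bar>w T\<bar>) \<le> R"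
    and lip: "\<And>x u v. x \<in> \<Omega> \<Longrightarrow> \<bar>\<phi> x u - \<phi> x v\<bar> \<le> \<bar>u - v\<bar>" and zero: "\<And>x. x \<in> \<Omega> \<Longrightarrow> \<phi> x 0 = 0"
    and lam: "lam \<ge> 0"
  shows "(\<Sum>s\<in>samples M \<Omega>. sample_prob p M s * exp (lam * (MAX w\<in>W.
            (\<Sum>x\<in>\<Omega>. p x * \<phi> x (\<Sum>T\<in>F. w T * b T x))
            - (1 / real M) * (\<Sum>k<M. \<phi> (s k) (\<Sum>T\<in>F. w T * b T (s k))))))
     \<le> 2 * card F * exp (2 * lam\<^sup>2 * R\<^sup>2 / M)"
proof -
  define c where "c = 2 * lam / M"
  have c: "c \<ge> 0" using lam by (simp add: c_def)
  have rademacher: "(\<Sum>\<sigma>\<in>signs M. exp (2 * lam * (MAX w\<in>W. (1 / real M) *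
        (\<Sum>k<M. \<sigma> k * \<phi> (s k) (\<Sum>T\<in>F. w T * b T (s k))))))
      \<le> 2 ^ M * (2 * card F * exp (2 * lam\<^sup>2 * R\<^sup>2 / M))"
    if s: "s \<in> samples M \<Omega>" for s
  proof -
    have "(\<Sum>\<sigma>\<in>signs M. exp (2 * lam * (MAX w\<in>W. (1 / real M) *
          (\<Sum>k<M. \<sigma> k * \<phi> (s k) (\<Sum>T\<in>F. w T * b T (s k))))))
        = (\<Sum>\<sigma>\<in>signs M. exp (c * (MAX w\<in>W. 0 + (\<Sum>k<M. \<sigma> k * \<phi> (s k) (\<Sum>T\<in>F. w T * b T (s k))))))"
      using Max_image_mult[OF W, of "1 / real M"] by (simp add: c_def)
    also have "\<dots> \<le> (\<Sum>\<sigma>\<in>signs M. exp (c * (MAX w\<in>W. 0 + (\<Sum>k<M. \<sigma> k * (\<Sum>T\<in>F. w T * b T (s k))))))"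
      using s lip zero by (intro rademacher_contraction_exp[OF W c]) (auto simp: PiE_iff)
    also have "\<dots> = (\<Sum>\<sigma>\<in>signs M. exp (c * (MAX w\<in>W. \<Sum>k<M. \<sigma> k * (\<Sum>T\<in>F. w T * b T (s k)))))"
      by simp
    also have "\<dots> \<le> 2 ^ M * (2 * card F * exp (c\<^sup>2 * R\<^sup>2 * M / 2))"
      using s b by (intro rademacher_l1_mgf_le[OF F W _ R c]) (auto simp: PiE_iff)
    also have "\<dots> = 2 ^ M * (2 * card F * exp (2 * lam\<^sup>2 * R\<^sup>2 / M))"
      using M by (simp add: c_def power2_eq_square)
    finally show ?thesis .
  qed
  have "(\<Sum>s\<in>samples M \<Omega>. sample_prob p M s * exp (lam * (MAX w\<in>W.
            (\<Sum>x\<in>\<Omega>. p x * \<phi> x (\<Sum>T\<in>F. w T * b T x))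
            - (1 / real M) * (\<Sum>k<M. \<phi> (s k) (\<Sum>T\<in>F. w T * b T (s k))))))
      \<le> (1 / 2 ^ M) * (\<Sum>s\<in>samples M \<Omega>. sample_prob p M s * (\<Sum>\<sigma>\<in>signs M. exp (2 * lam *
          (MAX w\<in>W. (1 / real M) * (\<Sum>k<M. \<sigma> k * \<phi> (s k) (\<Sum>T\<in>F. w T * b T (s k)))))))"
    using symmetrization_exp[OF W M lam, of "\<lambda>w x. \<phi> x (\<Sum>T\<in>F. w T * b T x)"]
    by (simp add: sum.swap[of _ "signs M"] sum_distrib_left)
  also have "\<dots> \<le> (1 / 2 ^ M) * (\<Sum>s\<in>samples M \<Omega>. sample_prob p M s * (2 ^ M * (2 * card F * exp (2 * lam\<^sup>2 * R\<^sup>2 / M))))"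
    by (intro mult_left_mono sum_mono sample_prob_nonneg rademacher) simp_all
  also have "\<dots> = 2 * card F * exp (2 * lam\<^sup>2 * R\<^sup>2 / M)"
    by (simp add: sum_sample_prob flip: sum_distrib_right)
  finally show ?thesis .
qed

lemma uniform_deviation_tail:
  fixes W :: "('f \<Rightarrow> real) set" and b :: "'f \<Rightarrow> 'a \<Rightarrow> real" and \<phi> :: "'a \<Rightarrow> real \<Rightarrow> real"
  assumes W: "finite W" "W \<noteq> {}" and M: "M > 0" and F: "finite F" "F \<noteq> {}"
    and b: "\<And>T x. T \<in> F \<Longrightarrow> x \<in> \<Omega> \<Longrightarrow> \<bar>b T x\<bar> \<le> 1"
    and R: "\<And>w. w \<in> W \<Longrightarrow> (\<Sum>T\<in>F. \<bar>w T\<bar>) \<le> R" and R_pos: "R > 0"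
    and lip: "\<And>x u v. x \<in> \<Omega> \<Longrightarrow> \<bar>\<phi> x u - \<phi> x v\<bar> \<le> \<bar>u - v\<bar>" and zero: "\<And>x. x \<in> \<Omega> \<Longrightarrow> \<phi> x 0 = 0"
    and t: "t \<ge> 0"
  shows "(\<Sum>s\<in>samples M \<Omega>. sample_prob p M s *
     (if \<exists>w\<in>W. t \<le> (\<Sum>x\<in>\<Omega>. p x * \<phi> x (\<Sum>T\<in>F. w T * b T x))
                   - (1 / real M) * (\<Sum>k<M. \<phi> (s k) (\<Sum>T\<in>F. w T * b T (s k))) then 1 else 0))
     \<le> 2 * card F * exp (- (t\<^sup>2 * M / (8 * R\<^sup>2)))"
proof -
  define lam where "lam = t * M / (4 * R\<^sup>2)"
  have lam: "lam \<ge> 0" using t by (simp add: lam_def)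
  define G where "G s = (MAX w\<in>W. (\<Sum>x\<in>\<Omega>. p x * \<phi> x (\<Sum>T\<in>F. w T * b T x))
    - (1 / real M) * (\<Sum>k<M. \<phi> (s k) (\<Sum>T\<in>F. w T * b T (s k))))" for s
  have "(\<Sum>s\<in>samples M \<Omega>. sample_prob p M s *
     (if \<exists>w\<in>W. t \<le> (\<Sum>x\<in>\<Omega>. p x * \<phi> x (\<Sum>T\<in>F. w T * b T x))
                   - (1 / real M) * (\<Sum>k<M. \<phi> (s k) (\<Sum>T\<in>F. w T * b T (s k))) then 1 else 0))
      \<le> exp (- lam * t) * (\<Sum>s\<in>samples M \<Omega>. sample_prob p M s * exp (lam * G s))"
    unfolding G_def using lam
    by (intro chernoff_bound sample_prob_nonneg) (auto intro: order_trans[OF _ Max_image_ge[OF W(1)]])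
  also have "\<dots> \<le> exp (- lam * t) * (2 * card F * exp (2 * lam\<^sup>2 * R\<^sup>2 / M))"
    unfolding G_def
    by (intro mult_left_mono exp_sup_deviation_expectation_le[OF W M F b R lip zero lam]) auto
  also have "\<dots> = 2 * card F * exp (- lam * t + 2 * lam\<^sup>2 * R\<^sup>2 / M)"
    by (simp only: exp_add mult_ac)
  also have "- lam * t + 2 * lam\<^sup>2 * R\<^sup>2 / M = - (t\<^sup>2 * M / (8 * R\<^sup>2))"
    using M R_pos by (simp add: lam_def field_simps power2_eq_square)
  finally show ?thesis .
qed

end

section \<open>The logistic loss\<close>

definition logloss :: "real \<Rightarrow> real" where
  "logloss v = ln (1 + exp (- v))"

text \<open>The expected logistic loss of the margin \<open>v\<close> against a label that is \<open>1\<close> with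
  probability \<open>q\<close> and \<open>-1\<close> otherwise.\<close>

definition cross_loss :: "real \<Rightarrow> real \<Rightarrow> real" where
  "cross_loss q v = q * logloss v + (1 - q) * logloss (- v)"

lemma sigmoid_pos: "0 < sigmoid x"
  unfolding sigmoid_def by (simp add: add_pos_pos)

lemma sigmoid_less_1: "sigmoid x < 1"
  unfolding sigmoid_def by (simp add: add_pos_pos)

lemma one_plus_exp_neq_0: "1 + exp x \<noteq> (0::real)"
  using exp_gt_zero[of x] by linarith

lemma one_minus_sigmoid: "1 - sigmoid x = exp (- x) / (1 + exp (- x))"
  unfolding sigmoid_def using one_plus_exp_neq_0[of "- x"] by (simp add: field_simps)

lemma sigmoid_eq_exp_div: "sigmoid x = exp x / (1 + exp x)"
  unfolding sigmoid_def by (simp add: field_simps exp_minus add_pos_pos)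

lemma sigmoid_has_real_derivative: "(sigmoid has_real_derivative sigmoid x * (1 - sigmoid x)) (at x)"
proof -
  have "((\<lambda>x. 1 / (1 + exp (- x))) has_real_derivative exp (- x) / (1 + exp (- x))\<^sup>2) (at x)"
    by (auto intro!: derivative_eq_intros simp: power2_eq_square one_plus_exp_neq_0)
  moreover have "exp (- x) / (1 + exp (- x))\<^sup>2 = sigmoid x * (1 - sigmoid x)"
    unfolding one_minus_sigmoid by (simp add: sigmoid_def power2_eq_square)
  ultimately show ?thesis unfolding sigmoid_def[abs_def] by simp
qed

lemma sigmoid_variance_le: "sigmoid x * (1 - sigmoid x) \<le> 1 / 4"
  using zero_le_power2[of "sigmoid x - 1 / 2"] by (simp add: power2_eq_square algebra_simps)

lemma sigmoid_variance_nonneg: "0 \<le> sigmoid x * (1 - sigmoid x)"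
  using sigmoid_pos[of x] sigmoid_less_1[of x] by simp

lemma sigmoid_mono: "a \<le> b \<Longrightarrow> sigmoid a \<le> sigmoid b"
  by (rule DERIV_nonneg_imp_nondecreasing[of a b sigmoid])
     (use sigmoid_has_real_derivative sigmoid_variance_nonneg in blast)+

lemma sigmoid_diff_le: "a \<le> b \<Longrightarrow> sigmoid b - sigmoid a \<le> (b - a) / 4"
proof -
  assume "a \<le> b"
  then have "a / 4 - sigmoid a \<le> b / 4 - sigmoid b"
  proof (rule DERIV_nonneg_imp_nondecreasing[of a b "\<lambda>x. x / 4 - sigmoid x"])
    fix x
    have "((\<lambda>x. x / 4 - sigmoid x) has_real_derivative 1 / 4 - sigmoid x * (1 - sigmoid x)) (at x)"
      by (auto intro!: derivative_eq_intros sigmoid_has_real_derivative)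
    then show "\<exists>y. ((\<lambda>x. x / 4 - sigmoid x) has_real_derivative y) (at x) \<and> 0 \<le> y"
      using sigmoid_variance_le[of x] by force
  qed
  then show ?thesis by (simp add: field_simps)
qed

lemma sigmoid_lipschitz: "\<bar>sigmoid a - sigmoid b\<bar> \<le> \<bar>a - b\<bar> / 4"
  using sigmoid_diff_le[of a b] sigmoid_diff_le[of b a] sigmoid_mono[of a b] sigmoid_mono[of b a]
  by (cases "a \<le> b") simp_all

lemma logloss_has_real_derivative: "(logloss has_real_derivative sigmoid v - 1) (at v)"
proof -
  have "((\<lambda>v. ln (1 + exp (- v))) has_real_derivative - exp (- v) / (1 + exp (- v))) (at v)"
    by (auto intro!: derivative_eq_intros simp: add_pos_pos)
  moreover have "- exp (- v) / (1 + exp (- v)) = sigmoid v - 1"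
    using one_minus_sigmoid[of v] by simp
  ultimately show ?thesis
    unfolding logloss_def[abs_def] by simp
qed

lemma logloss_0: "logloss 0 = ln 2"
  unfolding logloss_def by simp

lemma logloss_lipschitz: "\<bar>logloss a - logloss b\<bar> \<le> \<bar>a - b\<bar>"
proof -
  have *: "\<bar>logloss a - logloss b\<bar> \<le> \<bar>a - b\<bar>" if "a \<le> b" for a b
  proof -
    have "logloss b \<le> logloss a"
      by (rule DERIV_nonpos_imp_nonincreasing[OF that])
         (use logloss_has_real_derivative sigmoid_less_1 less_imp_le in force)
    moreover have "logloss a + a \<le> logloss b + b"
    proof (rule DERIV_nonneg_imp_nondecreasing[OF that, of "\<lambda>v. logloss v + v"])
      fix x
      have "((\<lambda>v. logloss v + v) has_real_derivative sigmoid x - 1 + 1) (at x)"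
        by (intro derivative_intros logloss_has_real_derivative)
      then show "\<exists>y. ((\<lambda>v. logloss v + v) has_real_derivative y) (at x) \<and> 0 \<le> y"
        using sigmoid_pos[of x] by force
    qed
    ultimately show ?thesis using that by simp
  qed
  show ?thesis
    using *[of a b] *[of b a] by (cases "a \<le> b") (simp_all add: abs_minus_commute)
qed

lemma cross_loss_has_real_derivative: "(cross_loss q has_real_derivative sigmoid v - q) (at v)"
proof -
  have "((\<lambda>v. q * ln (1 + exp (- v)) + (1 - q) * ln (1 + exp (- (- v)))) has_real_derivative
      q * (- exp (- v) / (1 + exp (- v))) + (1 - q) * (exp v / (1 + exp v))) (at v)"
    by (auto intro!: derivative_eq_intros simp: add_pos_pos) (simp_all add: mult.commute)
  moreover have "q * (- exp (- v) / (1 + exp (- v))) + (1 - q) * (exp v / (1 + exp v)) = sigmoid v - q"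
  proof -
    have e: "- exp (- v) / (1 + exp (- v)) = sigmoid v - 1"
      using one_minus_sigmoid[of v] by simp
    show ?thesis
      unfolding e sigmoid_eq_exp_div[symmetric] by (simp add: algebra_simps)
  qed
  ultimately show ?thesis
    unfolding cross_loss_def[abs_def] logloss_def by simp
qed

text \<open>Near the Bayes-optimal margin \<open>a\<close> the excess expected loss is at most quadratic
  (the loss is \<open>1/4\<close>-smooth) and at least twice the squared error of the predicted
  probability (Pinsker's inequality for Bernoulli distributions).\<close>

lemma cross_loss_excess_le: "cross_loss (sigmoid a) b - cross_loss (sigmoid a) a \<le> (b - a)\<^sup>2 / 8"
proof -
  define F where "F x = cross_loss (sigmoid a) x - cross_loss (sigmoid a) a - (x - a)\<^sup>2 / 8" for x
  have F': "(F has_real_derivative sigmoid x - sigmoid a - (x - a) / 4) (at x)" for x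
    unfolding F_def[abs_def]
    by (auto intro!: derivative_eq_intros cross_loss_has_real_derivative simp: power2_eq_square)
  have "F b \<le> F a"
  proof (cases "a \<le> b")
    case True
    show ?thesis
    proof (rule DERIV_nonpos_imp_nonincreasing[OF True])
      fix x assume "a \<le> x"
      then show "\<exists>y. (F has_real_derivative y) (at x) \<and> y \<le> 0"
        using F' sigmoid_diff_le[of a x] by force
    qed
  next
    case False
    show ?thesis
    proof (rule DERIV_nonneg_imp_nondecreasing[of b a])
      show "b \<le> a" using False by simp
      fix x assume "x \<le> a"
      then show "\<exists>y. (F has_real_derivative y) (at x) \<and> 0 \<le> y"
        using F' sigmoid_diff_le[of x a] by force
    qed
  qed
  then show ?thesis by (simp add: F_def)
qed

lemma cross_loss_excess_ge: "2 * (sigmoid a - sigmoid b)\<^sup>2 \<le> cross_loss (sigmoid a) b - cross_loss (sigmoid a) a"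
proof -
  define G where "G x = cross_loss (sigmoid a) x - cross_loss (sigmoid a) a - 2 * (sigmoid a - sigmoid x)\<^sup>2" for x
  have G': "(G has_real_derivative (sigmoid x - sigmoid a) * (1 - 4 * (sigmoid x * (1 - sigmoid x)))) (at x)" for x
    unfolding G_def[abs_def]
    by (rule derivative_eq_intros cross_loss_has_real_derivative sigmoid_has_real_derivative refl | simp)+
       (simp add: algebra_simps power2_eq_square)
  have factor: "0 \<le> 1 - 4 * (sigmoid x * (1 - sigmoid x))" for x
    using sigmoid_variance_le[of x] by simp
  have "G a \<le> G b"
  proof (cases "a \<le> b")
    case True
    show ?thesis
    proof (rule DERIV_nonneg_imp_nondecreasing[OF True])
      fix x assume "a \<le> x"
      then have "0 \<le> (sigmoid x - sigmoid a) * (1 - 4 * (sigmoid x * (1 - sigmoid x)))"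
        using sigmoid_mono[of a x] factor[of x] by simp
      then show "\<exists>y. (G has_real_derivative y) (at x) \<and> 0 \<le> y"
        using G' by blast
    qed
  next
    case False
    show ?thesis
    proof (rule DERIV_nonpos_imp_nonincreasing[of b a])
      show "b \<le> a" using False by simp
      fix x assume "x \<le> a"
      then have "(sigmoid x - sigmoid a) * (1 - 4 * (sigmoid x * (1 - sigmoid x))) \<le> 0"
        using sigmoid_mono[of x a] factor[of x] by (simp add: mult_nonpos_nonneg)
      then show "\<exists>y. (G has_real_derivative y) (at x) \<and> y \<le> 0"
        using G' by blast
    qed
  qed
  then show ?thesis by (simp add: G_def)
qed

section \<open>Fourier analysis on the Boolean cube\<close>

lemma cube_memD: "x \<in> cube n \<Longrightarrow> i < n \<Longrightarrow> x i = 1 \<or> x i = -1"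
  unfolding cube_def by auto

lemma abs_cube_le_1: "x \<in> cube n \<Longrightarrow> \<bar>x i\<bar> \<le> 1"
  unfolding cube_def by (cases "i < n") auto

lemma fun_upd_in_cube: "x \<in> cube n \<Longrightarrow> u < n \<Longrightarrow> v \<in> {-1, 1} \<Longrightarrow> x(u := v) \<in> cube n"
  unfolding cube_def by auto

lemma cube_eq_image_PiE: "cube n = (\<lambda>f i. if i < n then f i else 0) ` signs n"
  using dflt_image_PiE[of "{..<n}" "0::real" "\<lambda>_. {-1, 1}"]
  by (simp add: cube_def PiE_dflt_def not_less all_conj_distrib)

lemma inj_on_cube_extension: "inj_on (\<lambda>f i. if i < n then f i else 0) (signs n)"
  by (rule inj_onI) (auto simp: fun_eq_iff PiE_def extensional_def, metis)

lemma finite_cube: "finite (cube n)"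
  unfolding cube_eq_image_PiE by (intro finite_imageI finite_PiE) auto

lemma cube_nonempty: "cube n \<noteq> {}"
  unfolding cube_eq_image_PiE by (simp add: PiE_eq_empty_iff)

lemma sum_cube_prod:
  "(\<Sum>y\<in>cube m. \<Prod>j<m. F j (y j)) = (\<Prod>j<m. F j 1 + F j (-1) :: real)"
proof -
  have "(\<Sum>y\<in>cube m. \<Prod>j<m. F j (y j)) = (\<Sum>f\<in>signs m. \<Prod>j<m. F j (f j))"
    unfolding cube_eq_image_PiE sum.reindex[OF inj_on_cube_extension] by (intro sum.cong refl prod.cong) auto
  also have "\<dots> = (\<Prod>j<m. F j 1 + F j (-1))"
    by (subst sum_samples_prod) (simp_all add: add.commute)
  finally show ?thesis .
qed

definition flip_at :: "nat \<Rightarrow> (nat \<Rightarrow> real) \<Rightarrow> (nat \<Rightarrow> real)" where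
  "flip_at u x = x(u := - x u)"

lemma flip_at_in_cube: "x \<in> cube n \<Longrightarrow> u < n \<Longrightarrow> flip_at u x \<in> cube n"
  unfolding flip_at_def using cube_memD[of x n u] by (intro fun_upd_in_cube) auto

lemma flip_at_flip_at [simp]: "flip_at u (flip_at u x) = x"
  unfolding flip_at_def by auto

lemma sum_cube_flip_at: "u < n \<Longrightarrow> (\<Sum>x\<in>cube n. G (flip_at u x)) = (\<Sum>x\<in>cube n. G x)"
  by (rule sum.reindex_bij_witness[of _ "flip_at u" "flip_at u"]) (auto simp: flip_at_in_cube)

lemma sum_cube_eq_by_flip_pairs:
  fixes G1 G2 :: "(nat \<Rightarrow> real) \<Rightarrow> real"
  assumes u: "u < n" and pairs: "\<And>x. x \<in> cube n \<Longrightarrow> G1 x + G1 (flip_at u x) = G2 x + G2 (flip_at u x)"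
  shows "(\<Sum>x\<in>cube n. G1 x) = (\<Sum>x\<in>cube n. G2 x)"
proof -
  have "2 * (\<Sum>x\<in>cube n. G1 x) = (\<Sum>x\<in>cube n. G1 x + G1 (flip_at u x))"
    using sum_cube_flip_at[OF u, of G1] by (simp add: sum.distrib)
  also have "\<dots> = (\<Sum>x\<in>cube n. G2 x + G2 (flip_at u x))"
    using pairs by (rule sum.cong[OF refl])
  also have "\<dots> = 2 * (\<Sum>x\<in>cube n. G2 x)"
    using sum_cube_flip_at[OF u, of G2] by (simp add: sum.distrib)
  finally show ?thesis by simp
qed

lemma abs_chi_le_1: "x \<in> cube n \<Longrightarrow> \<bar>chi T x\<bar> \<le> 1"
  unfolding chi_def abs_prod by (intro prod_le_1) (auto simp: abs_cube_le_1)

lemma chi_fun_upd_mem: "finite T \<Longrightarrow> u \<in> T \<Longrightarrow> chi T (x(u := v)) = v * chi (T - {u}) x"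
  unfolding chi_def by (subst prod.remove[of T u]) (auto intro!: prod.cong)

lemma chi_fun_upd_nonmem: "u \<notin> T \<Longrightarrow> chi T (x(u := v)) = chi T x"
  unfolding chi_def by (intro prod.cong) auto

lemma chi_flip_at: "finite T \<Longrightarrow> u \<in> T \<Longrightarrow> chi T (flip_at u x) = - chi T x"
  unfolding flip_at_def by (simp add: chi_fun_upd_mem chi_def prod.remove)

lemma sum_cube_mult_chi_eq_0:
  fixes G :: "(nat \<Rightarrow> real) \<Rightarrow> real"
  assumes T: "finite T" "i \<in> T" and i: "i < n" and inv: "\<And>x. x \<in> cube n \<Longrightarrow> G (flip_at i x) = G x"
  shows "(\<Sum>x\<in>cube n. G x * chi T x) = 0"
proof -
  have "(\<Sum>x\<in>cube n. G x * chi T x) = (\<Sum>x\<in>cube n. G (flip_at i x) * chi T (flip_at i x))"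
    using sum_cube_flip_at[OF i, of "\<lambda>x. G x * chi T x"] by simp
  also have "\<dots> = - (\<Sum>x\<in>cube n. G x * chi T x)"
    using inv by (simp add: chi_flip_at[OF T] sum_negf)
  finally show ?thesis by simp
qed

lemma sum_Pow_chi_mult_chi:
  assumes x: "x \<in> cube n" and y: "y \<in> cube n"
  shows "(\<Sum>T\<in>Pow {0..<n}. chi T y * chi T x) = (if y = x then 2 ^ n else 0)"
proof -
  have "(\<Sum>T\<in>Pow {0..<n}. chi T y * chi T x) = (\<Prod>i\<in>{0..<n}. 1 + y i * x i)"
    using prod_add[of "{0..<n}" "\<lambda>i. y i * x i" "\<lambda>_. 1"]
    by (simp add: chi_def prod.distrib add.commute)
  also have "\<dots> = (if y = x then 2 ^ n else 0)"
  proof (cases "y = x")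
    case True
    have "1 + x i * x i = 2" if "i \<in> {0..<n}" for i
      using cube_memD[OF x, of i] that by auto
    then have "(\<Prod>i\<in>{0..<n}. 1 + y i * x i) = (\<Prod>i\<in>{0..<n}. 2 :: real)"
      using True by (intro prod.cong) auto
    then show ?thesis using True by simp
  next
    case False
    then obtain i where i: "y i \<noteq> x i" by auto
    moreover have "i < n"
    proof (rule ccontr)
      assume "\<not> i < n"
      then show False using i x y by (simp add: cube_def)
    qed
    ultimately have "1 + y i * x i = 0"
      using cube_memD[OF x] cube_memD[OF y] by force
    then have "(\<Prod>i\<in>{0..<n}. 1 + y i * x i) = 0"
      using \<open>i < n\<close> by (intro prod_zero) auto
    then show ?thesis using False by simp
  qed
  finally show ?thesis .
qed

lemma fourier_expansion:
  fixes G :: "(nat \<Rightarrow> real) \<Rightarrow> real"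
  assumes x: "x \<in> cube n"
  shows "G x = (\<Sum>T\<in>Pow {0..<n}. ((\<Sum>y\<in>cube n. G y * chi T y) / 2 ^ n) * chi T x)"
proof -
  have "(\<Sum>T\<in>Pow {0..<n}. ((\<Sum>y\<in>cube n. G y * chi T y) / 2 ^ n) * chi T x)
      = (1 / 2 ^ n) * (\<Sum>y\<in>cube n. G y * (\<Sum>T\<in>Pow {0..<n}. chi T y * chi T x))"
    by (simp add: sum_distrib_left sum_distrib_right sum_divide_distrib mult_ac sum.swap[of _ "Pow {0..<n}"])
  also have "\<dots> = (1 / 2 ^ n) * (\<Sum>y\<in>cube n. G y * (if y = x then 2 ^ n else 0))"
    by (simp add: sum_Pow_chi_mult_chi[OF x] cong: sum.cong)
  also have "\<dots> = G x"
    using x finite_cube[of n] by (simp add: if_distrib cong: if_cong)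
  finally show ?thesis by simp
qed

section \<open>The observed marginal of an RBM\<close>

lemma sum_rbm_weight:
  "(\<Sum>y\<in>cube m. rbm_weight n m J h g x y) = exp (rbm_f n m J h g x)"
proof -
  define c where "c j = (\<Sum>i<n. J i j * x i) + g j" for j
  have "rbm_weight n m J h g x y = exp (\<Sum>i<n. h i * x i) * (\<Prod>j<m. exp (y j * c j))" for y
  proof -
    have "(\<Sum>i<n. \<Sum>j<m. x i * J i j * y j) + (\<Sum>j<m. g j * y j) = (\<Sum>j<m. y j * c j)"
      unfolding c_def by (subst sum.swap) (simp add: sum.distrib[symmetric] sum_distrib_left algebra_simps)
    then have "rbm_weight n m J h g x y = exp ((\<Sum>i<n. h i * x i) + (\<Sum>j<m. y j * c j))"
      unfolding rbm_weight_def by (simp add: algebra_simps)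
    then show ?thesis by (simp add: exp_add exp_sum)
  qed
  then have "(\<Sum>y\<in>cube m. rbm_weight n m J h g x y) = exp (\<Sum>i<n. h i * x i) * (\<Prod>j<m. exp (c j) + exp (- c j))"
    using sum_cube_prod[of "\<lambda>j e. exp (e * c j)" m] by (simp flip: sum_distrib_left)
  also have "\<dots> = exp (\<Sum>i<n. h i * x i) * exp (\<Sum>j<m. rho (c j))"
    by (simp add: exp_sum rho_def add_pos_pos)
  finally show ?thesis
    unfolding rbm_f_def c_def by (simp add: exp_add mult.commute)
qed

lemma rbm_Z_pos: "0 < rbm_Z n m J h g"
  unfolding rbm_Z_def rbm_weight_def by (intro sum_pos finite_cube cube_nonempty) auto

lemma rbm_marg_eq: "rbm_marg n m J h g x = exp (rbm_f n m J h g x) / rbm_Z n m J h g"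
  unfolding rbm_marg_def by (simp add: sum_rbm_weight)

lemma rbm_marg_pos: "0 < rbm_marg n m J h g x"
  using rbm_Z_pos by (simp add: rbm_marg_eq)

lemma finite_prob_rbm_marg: "finite_prob (cube n) (rbm_marg n m J h g)"
proof
  show "(\<Sum>x\<in>cube n. rbm_marg n m J h g x) = 1"
    unfolding rbm_marg_def using rbm_Z_pos[of n m J h g]
    by (simp add: rbm_Z_def flip: sum_divide_distrib)
qed (auto simp: finite_cube less_imp_le[OF rbm_marg_pos])

text \<open>The conditional law of \<open>X\<^sub>u\<close> is logistic in \<open>f (x(u := 1)) - f (x(u := -1))\<close>;
  in the Fourier basis this difference is twice the part of \<open>f\<close> whose characters contain \<open>u\<close>.\<close>

definition rbm_logit ::
  "nat \<Rightarrow> nat \<Rightarrow> (nat \<Rightarrow> nat \<Rightarrow> real) \<Rightarrow> (nat \<Rightarrow> real) \<Rightarrow> (nat \<Rightarrow> real) \<Rightarrow> nat \<Rightarrow> (nat \<Rightarrow> real) \<Rightarrow> real"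
  where "rbm_logit n m J h g u x = 2 * (\<Sum>T\<in>{T\<in>Pow {0..<n}. u \<in> T}. fhat n m J h g T * chi (T - {u}) x)"

lemma rbm_cond_eq_sigmoid_diff:
  "rbm_cond n m J h g u x = sigmoid (rbm_f n m J h g (x(u := 1)) - rbm_f n m J h g (x(u := -1)))"
proof -
  define a b where "a = rbm_f n m J h g (x(u := 1))" and "b = rbm_f n m J h g (x(u := -1))"
  have "rbm_cond n m J h g u x = exp a / (exp a + exp b)"
    using rbm_Z_pos[of n m J h g] by (simp add: rbm_cond_def rbm_marg_eq a_def b_def field_simps)
  also have "\<dots> = sigmoid (a - b)"
    by (simp add: sigmoid_def field_simps exp_diff exp_minus add_pos_pos)
  finally show ?thesis by (simp add: a_def b_def)
qed

lemma rbm_f_fourier: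
  "x \<in> cube n \<Longrightarrow> rbm_f n m J h g x = (\<Sum>T\<in>Pow {0..<n}. fhat n m J h g T * chi T x)"
  unfolding fhat_def by (rule fourier_expansion)

lemma rbm_cond_eq_sigmoid_logit:
  assumes x: "x \<in> cube n" and u: "u < n"
  shows "rbm_cond n m J h g u x = sigmoid (rbm_logit n m J h g u x)"
proof -
  have "rbm_f n m J h g (x(u := 1)) - rbm_f n m J h g (x(u := -1))
      = (\<Sum>T\<in>Pow {0..<n}. fhat n m J h g T * (chi T (x(u := 1)) - chi T (x(u := -1))))"
    using fun_upd_in_cube[OF x u]
    by (simp add: rbm_f_fourier sum_subtractf[symmetric] right_diff_distrib)
  also have "\<dots> = (\<Sum>T\<in>Pow {0..<n}. if u \<in> T then 2 * (fhat n m J h g T * chi (T - {u}) x) else 0)"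
    by (intro sum.cong refl) (auto simp: chi_fun_upd_mem chi_fun_upd_nonmem finite_subset)
  also have "\<dots> = rbm_logit n m J h g u x"
    by (simp add: rbm_logit_def sum.inter_filter[symmetric] sum_distrib_left)
  finally show ?thesis by (simp add: rbm_cond_eq_sigmoid_diff)
qed

lemma rbm_logit_fun_upd: "rbm_logit n m J h g u (x(u := v)) = rbm_logit n m J h g u x"
  unfolding rbm_logit_def by (intro arg_cong[where f="\<lambda>z. 2 * z"] sum.cong refl) (simp add: chi_fun_upd_nonmem)

lemma rbm_gamma_ge:
  "u < n \<Longrightarrow> (\<Sum>T\<in>{T. T \<subseteq> {0..<n} \<and> u \<in> T}. \<bar>fhat n m J h g T\<bar>) \<le> rbm_gamma n m J h g"
  unfolding rbm_gamma_def by (intro Max_ge) auto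

lemma rbm_gamma_nonneg: "0 \<le> rbm_gamma n m J h g"
  unfolding rbm_gamma_def by (intro Max_ge) auto

lemma abs_rbm_logit_le:
  assumes x: "x \<in> cube n" and u: "u < n"
  shows "\<bar>rbm_logit n m J h g u x\<bar> \<le> 2 * rbm_gamma n m J h g"
proof -
  have "\<bar>\<Sum>T\<in>{T\<in>Pow {0..<n}. u \<in> T}. fhat n m J h g T * chi (T - {u}) x\<bar>
      \<le> (\<Sum>T\<in>{T\<in>Pow {0..<n}. u \<in> T}. \<bar>fhat n m J h g T\<bar>)"
    by (rule order_trans[OF sum_abs sum_mono]) (auto simp: abs_mult intro: mult_left_le abs_chi_le_1[OF x])
  also have "\<dots> \<le> rbm_gamma n m J h g"
    using rbm_gamma_ge[OF u] by (simp add: Pow_def)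
  finally show ?thesis unfolding rbm_logit_def by simp
qed

text \<open>Each hidden unit contributes \<open>\<rho>(J\<^sub>j \<cdot> x + g\<^sub>j)\<close>, which depends only on the
  coordinates in the support of \<open>J\<^sub>j\<close>, and the external field contributes only to
  singletons.\<close>

lemma fhat_eq_0:
  assumes T: "T \<subseteq> {0..<n}" and ab: "a \<in> T" "b \<in> T" "a \<noteq> b"
    and not_in_support: "\<And>j. j < m \<Longrightarrow> \<not> T \<subseteq> {i. i < n \<and> J i j \<noteq> 0}"
  shows "fhat n m J h g T = 0"
proof -
  have fin: "finite T" using T by (rule finite_subset) simp
  define c where "c j x = (\<Sum>i<n. J i j * x i) + g j" for j x
  have "(\<Sum>x\<in>cube n. rbm_f n m J h g x * chi T x)
      = (\<Sum>j<m. \<Sum>x\<in>cube n. rho (c j x) * chi T x) + (\<Sum>i<n. h i * (\<Sum>x\<in>cube n. x i * chi T x))"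
    unfolding rbm_f_def c_def
    by (simp add: distrib_right sum.distrib sum_distrib_right sum_distrib_left mult.assoc
        sum.swap[of _ "cube n"])
  also have "(\<Sum>j<m. \<Sum>x\<in>cube n. rho (c j x) * chi T x) = 0"
  proof (rule sum.neutral, rule ballI)
    fix j assume "j \<in> {..<m}"
    then obtain i where "i \<in> T" "\<not> (i < n \<and> J i j \<noteq> 0)"
      using not_in_support[of j] by auto
    with T have i: "i \<in> T" "i < n" "J i j = 0" by auto
    then have "c j (flip_at i x) = c j x" for x
      unfolding c_def flip_at_def by (intro arg_cong2[where f="(+)"] sum.cong) auto
    then show "(\<Sum>x\<in>cube n. rho (c j x) * chi T x) = 0"
      using sum_cube_mult_chi_eq_0[OF fin i(1,2), of "\<lambda>x. rho (c j x)"] by simp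
  qed
  also have "(\<Sum>i<n. h i * (\<Sum>x\<in>cube n. x i * chi T x)) = 0"
  proof (rule sum.neutral, rule ballI)
    fix i assume "i \<in> {..<n}"
    obtain i' where i': "i' \<in> T" "i' \<noteq> i" using ab by blast
    with T have "(\<Sum>x\<in>cube n. x i * chi T x) = 0"
      by (intro sum_cube_mult_chi_eq_0[OF fin i'(1)]) (auto simp: flip_at_def)
    then show "h i * (\<Sum>x\<in>cube n. x i * chi T x) = 0" by simp
  qed
  finally show ?thesis unfolding fhat_def by simp
qed

lemma card_nonempty_subsets_le:
  assumes "finite A"
  shows "card {S. S \<subseteq> A \<and> S \<noteq> {} \<and> card S \<le> d} \<le> card A ^ d"
proof -
  have "{S. S \<subseteq> A \<and> S \<noteq> {} \<and> card S \<le> d} \<subseteq> set ` {xs. set xs \<subseteq> A \<and> length xs = d}"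
  proof
    fix S assume S: "S \<in> {S. S \<subseteq> A \<and> S \<noteq> {} \<and> card S \<le> d}"
    then have fin: "finite S" using assms finite_subset by blast
    from S obtain a where "a \<in> S" by auto
    obtain ys where ys: "set ys = S" "distinct ys" using finite_distinct_list[OF fin] by blast
    define xs where "xs = ys @ replicate (d - card S) a"
    have "set xs = S" "length xs = d"
      using ys S \<open>a \<in> S\<close> by (auto simp: xs_def distinct_card[symmetric])
    then show "S \<in> set ` {xs. set xs \<subseteq> A \<and> length xs = d}"
      using S by (intro image_eqI[of _ _ xs]) auto
  qed
  then have "card {S. S \<subseteq> A \<and> S \<noteq> {} \<and> card S \<le> d} \<le> card (set ` {xs. set xs \<subseteq> A \<and> length xs = d})"
    by (intro card_mono finite_imageI finite_lists_length_eq assms)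
  also have "\<dots> \<le> card {xs. set xs \<subseteq> A \<and> length xs = d}"
    by (intro card_image_le finite_lists_length_eq assms)
  also have "\<dots> = card A ^ d"
    by (rule card_lists_length_eq[OF assms])
  finally show ?thesis .
qed

lemma card_mrf_nbhd_le: "u < n \<Longrightarrow> card (mrf_nbhd n m J h g u) \<le> rbm_D n m J h g"
  unfolding rbm_D_def by (intro Max_ge) auto

lemma card_support_le: "j < m \<Longrightarrow> card {i. i < n \<and> J i j \<noteq> 0} \<le> rbm_d n m J"
  unfolding rbm_d_def by (intro Max_ge) auto

lemma mrf_nbhd_subset: "mrf_nbhd n m J h g u \<subseteq> {0..<n}"
  unfolding mrf_nbhd_def by auto

lemma not_mem_mrf_nbhd: "u \<notin> mrf_nbhd n m J h g u"
  unfolding mrf_nbhd_def by auto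

section \<open>Truncating the logit to the estimated neighbourhood\<close>

lemma feat_dot_fun_upd: "u \<notin> N \<Longrightarrow> feat_dot N w (x(u := v)) = feat_dot N w x"
  unfolding feat_dot_def by (intro sum.cong refl arg_cong2[where f="(*)"] chi_fun_upd_nonmem) auto

lemma abs_feat_dot_le: "x \<in> cube n \<Longrightarrow> \<bar>feat_dot N w x\<bar> \<le> l1norm N w"
  unfolding feat_dot_def l1norm_def
  by (rule order_trans[OF sum_abs sum_mono]) (auto simp: abs_mult intro: mult_left_le abs_chi_le_1)

text \<open>The weights under which \<open>feat_dot N\<close> reproduces the terms of \<open>rbm_logit u\<close> indexed
  by the sets \<open>T = insert u S\<close> with \<open>S \<subseteq> N\<close>.\<close>

definition logit_weight ::
  "nat \<Rightarrow> nat \<Rightarrow> (nat \<Rightarrow> nat \<Rightarrow> real) \<Rightarrow> (nat \<Rightarrow> real) \<Rightarrow> (nat \<Rightarrow> real) \<Rightarrow> nat \<Rightarrow> nat set \<Rightarrow> real"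
  where "logit_weight n m J h g u S = 2 * fhat n m J h g (insert u S)"

definition missing_sets :: "nat \<Rightarrow> nat \<Rightarrow> nat set \<Rightarrow> nat set set" where
  "missing_sets n u N = {T \<in> Pow {0..<n}. u \<in> T \<and> \<not> T - {u} \<subseteq> N}"

lemma sum_Pow_eq_sum_insert:
  assumes "u \<notin> N"
  shows "(\<Sum>S\<in>Pow N. F S) = (\<Sum>T\<in>{T. u \<in> T \<and> T - {u} \<subseteq> N}. F (T - {u}))"
  by (rule sum.reindex_bij_witness[of _ "\<lambda>T. T - {u}" "insert u"])
     (use assms in \<open>auto intro!: arg_cong[where f=F]\<close>)

lemma feat_dot_logit_weight:
  assumes "u \<notin> N"
  shows "feat_dot N (logit_weight n m J h g u) x
    = 2 * (\<Sum>T\<in>{T. u \<in> T \<and> T - {u} \<subseteq> N}. fhat n m J h g T * chi (T - {u}) x)"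
  unfolding feat_dot_def logit_weight_def sum_Pow_eq_sum_insert[OF assms]
  by (simp add: sum_distrib_left mult.assoc insert_absorb)

lemma l1norm_logit_weight_le:
  assumes u: "u < n" and N: "N \<subseteq> {0..<n}" "u \<notin> N"
  shows "l1norm N (logit_weight n m J h g u) \<le> 2 * rbm_gamma n m J h g"
proof -
  have "l1norm N (logit_weight n m J h g u) = 2 * (\<Sum>T\<in>{T. u \<in> T \<and> T - {u} \<subseteq> N}. \<bar>fhat n m J h g T\<bar>)"
    unfolding l1norm_def logit_weight_def sum_Pow_eq_sum_insert[OF N(2)]
    by (simp add: abs_mult sum_distrib_left insert_absorb)
  also have "\<dots> \<le> 2 * (\<Sum>T\<in>{T. T \<subseteq> {0..<n} \<and> u \<in> T}. \<bar>fhat n m J h g T\<bar>)"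
    using u N by (intro mult_left_mono sum_mono2) auto
  also have "\<dots> \<le> 2 * rbm_gamma n m J h g"
    using rbm_gamma_ge[OF u] by simp
  finally show ?thesis .
qed

lemma abs_rbm_logit_minus_feat_dot_le:
  assumes u: "u < n" and N: "N \<subseteq> {0..<n}" "u \<notin> N" and x: "x \<in> cube n"
  shows "\<bar>rbm_logit n m J h g u x - feat_dot N (logit_weight n m J h g u) x\<bar>
    \<le> 2 * (\<Sum>T\<in>missing_sets n u N. \<bar>fhat n m J h g T\<bar>)"
proof -
  let ?C = "{T. u \<in> T \<and> T - {u} \<subseteq> N}"
  have split: "{T\<in>Pow {0..<n}. u \<in> T} = ?C \<union> missing_sets n u N" "?C \<inter> missing_sets n u N = {}"
    using u N by (auto simp: missing_sets_def)
  have "finite (?C \<union> missing_sets n u N)"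
    unfolding split(1)[symmetric] by simp
  then have fin: "finite ?C" "finite (missing_sets n u N)"
    by simp_all
  have "rbm_logit n m J h g u x - feat_dot N (logit_weight n m J h g u) x
      = 2 * (\<Sum>T\<in>missing_sets n u N. fhat n m J h g T * chi (T - {u}) x)"
    unfolding rbm_logit_def feat_dot_logit_weight[OF N(2)] split(1) sum.union_disjoint[OF fin split(2)]
    by simp
  moreover have "\<bar>\<Sum>T\<in>missing_sets n u N. fhat n m J h g T * chi (T - {u}) x\<bar>
      \<le> (\<Sum>T\<in>missing_sets n u N. \<bar>fhat n m J h g T\<bar>)"
    by (rule order_trans[OF sum_abs sum_mono]) (auto simp: abs_mult intro: mult_left_le abs_chi_le_1[OF x])
  ultimately show ?thesis by simp
qed

lemma card_missing_support_le:
  assumes u: "u < n" and N: "N \<subseteq> mrf_nbhd n m J h g u"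
  shows "card {T \<in> missing_sets n u N. fhat n m J h g T \<noteq> 0} \<le> rbm_D n m J h g ^ rbm_d n m J"
proof -
  let ?NZ = "{T \<in> missing_sets n u N. fhat n m J h g T \<noteq> 0}"
  let ?nb = "mrf_nbhd n m J h g u"
  have fin: "finite ?nb"
    using mrf_nbhd_subset by (rule finite_subset) simp
  have "T - {u} \<in> {S. S \<subseteq> ?nb \<and> S \<noteq> {} \<and> card S \<le> rbm_d n m J}" if T: "T \<in> ?NZ" for T
  proof -
    from T have T_sub: "T \<subseteq> {0..<n}" and "u \<in> T" and nz: "fhat n m J h g T \<noteq> 0"
      and "\<not> T - {u} \<subseteq> N" by (auto simp: missing_sets_def)
    then obtain i where i: "i \<in> T" "i \<noteq> u" by auto
    have sub: "T - {u} \<subseteq> ?nb"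
    proof
      fix i assume "i \<in> T - {u}"
      with T_sub \<open>u \<in> T\<close> nz show "i \<in> ?nb"
        unfolding mrf_nbhd_def by (auto intro!: exI[of _ T])
    qed
    obtain j where j: "j < m" "T \<subseteq> {i. i < n \<and> J i j \<noteq> 0}"
      using fhat_eq_0[OF T_sub \<open>u \<in> T\<close> i(1) i(2)[symmetric]] nz by blast
    have "card (T - {u}) \<le> card T"
      using T_sub by (intro card_mono) (auto intro: finite_subset)
    also have "\<dots> \<le> card {i. i < n \<and> J i j \<noteq> 0}"
      using j(2) by (intro card_mono) auto
    also have "\<dots> \<le> rbm_d n m J"
      by (rule card_support_le[OF j(1)])
    finally show ?thesis using sub i by auto
  qed
  moreover have "inj_on (\<lambda>T. T - {u}) ?NZ"
  proof (rule inj_onI)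
    fix T1 T2 assume "T1 \<in> ?NZ" "T2 \<in> ?NZ" and eq: "T1 - {u} = T2 - {u}"
    then have "u \<in> T1" "u \<in> T2" by (auto simp: missing_sets_def)
    then show "T1 = T2" using eq by (metis insert_Diff)
  qed
  moreover have "finite {S. S \<subseteq> ?nb \<and> S \<noteq> {} \<and> card S \<le> rbm_d n m J}"
    by (rule finite_subset[of _ "Pow ?nb"]) (auto simp: fin)
  ultimately have "card ?NZ \<le> card {S. S \<subseteq> ?nb \<and> S \<noteq> {} \<and> card S \<le> rbm_d n m J}"
    by (intro card_inj_on_le[of "\<lambda>T. T - {u}"]) blast+
  also have "\<dots> \<le> card ?nb ^ rbm_d n m J"
    using fin by (rule card_nonempty_subsets_le)
  also have "\<dots> \<le> rbm_D n m J h g ^ rbm_d n m J"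
    by (intro power_mono card_mrf_nbhd_le u) simp
  finally show ?thesis .
qed

lemma missing_mass_le:
  assumes u: "u < n" and N: "N \<subseteq> mrf_nbhd n m J h g u" and \<zeta>: "0 \<le> \<zeta>"
    and large: "\<forall>i. i < n \<and> i \<noteq> u \<and> (\<exists>T. T \<subseteq> {0..<n} \<and> u \<in> T \<and> i \<in> T \<and> \<bar>fhat n m J h g T\<bar> \<ge> \<zeta>)
        \<longrightarrow> i \<in> N"
  shows "(\<Sum>T\<in>missing_sets n u N. \<bar>fhat n m J h g T\<bar>) \<le> \<zeta> * rbm_D n m J h g ^ rbm_d n m J"
proof -
  let ?NZ = "{T \<in> missing_sets n u N. fhat n m J h g T \<noteq> 0}"
  have "(\<Sum>T\<in>missing_sets n u N. \<bar>fhat n m J h g T\<bar>) = (\<Sum>T\<in>?NZ. \<bar>fhat n m J h g T\<bar>)"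
    by (rule sum.mono_neutral_right) (auto simp: missing_sets_def)
  also have "\<dots> \<le> (\<Sum>T\<in>?NZ. \<zeta>)"
  proof (rule sum_mono)
    fix T assume "T \<in> ?NZ"
    then obtain i where "T \<subseteq> {0..<n}" "u \<in> T" "i \<in> T" "i \<noteq> u" "i \<notin> N"
      by (auto simp: missing_sets_def)
    moreover from this have "i < n" by auto
    ultimately have "\<not> \<zeta> \<le> \<bar>fhat n m J h g T\<bar>"
      using large by blast
    then show "\<bar>fhat n m J h g T\<bar> \<le> \<zeta>" by simp
  qed
  also have "\<dots> = \<zeta> * card ?NZ"
    by simp
  also have "\<dots> \<le> \<zeta> * rbm_D n m J h g ^ rbm_d n m J"
    using card_missing_support_le[OF u N] \<zeta> by (intro mult_left_mono) simp_all
  finally show ?thesis .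
qed

section \<open>Excess risk of the regression\<close>

definition prediction_error ::
  "nat \<Rightarrow> nat \<Rightarrow> (nat \<Rightarrow> nat \<Rightarrow> real) \<Rightarrow> (nat \<Rightarrow> real) \<Rightarrow> (nat \<Rightarrow> real) \<Rightarrow> nat \<Rightarrow> nat set \<Rightarrow> (nat set \<Rightarrow> real) \<Rightarrow> real"
  where "prediction_error n m J h g u N w =
    (\<Sum>x\<in>cube n. rbm_marg n m J h g x * (rbm_cond n m J h g u x - sigmoid (feat_dot N w x))\<^sup>2)"

definition expected_loss ::
  "nat \<Rightarrow> nat \<Rightarrow> (nat \<Rightarrow> nat \<Rightarrow> real) \<Rightarrow> (nat \<Rightarrow> real) \<Rightarrow> (nat \<Rightarrow> real) \<Rightarrow> nat \<Rightarrow> ((nat \<Rightarrow> real) \<Rightarrow> real) \<Rightarrow> real"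
  where "expected_loss n m J h g u b = (\<Sum>x\<in>cube n. rbm_marg n m J h g x * logloss (x u * b x))"

text \<open>Pairing each \<open>x\<close> with \<open>flip_at u x\<close> replaces the label \<open>x u\<close> by its conditional
  law given the other coordinates.\<close>

lemma expected_loss_eq_cross_loss:
  assumes u: "u < n" and inv: "\<And>x v. b (x(u := v)) = b x"
  shows "expected_loss n m J h g u b
    = (\<Sum>x\<in>cube n. rbm_marg n m J h g x * cross_loss (rbm_cond n m J h g u x) (b x))"
  unfolding expected_loss_def
proof (rule sum_cube_eq_by_flip_pairs[OF u])
  fix x assume x: "x \<in> cube n"
  define mp mm where "mp = rbm_marg n m J h g (x(u := 1))" and "mm = rbm_marg n m J h g (x(u := -1))"
  have pos: "0 < mp + mm" using rbm_marg_pos by (simp add: mp_def mm_def add_pos_pos)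
  have cond: "rbm_cond n m J h g u x = mp / (mp + mm)" "rbm_cond n m J h g u (flip_at u x) = mp / (mp + mm)"
    by (simp_all add: rbm_cond_def mp_def mm_def flip_at_def)
  have b: "b (flip_at u x) = b x" unfolding flip_at_def by (rule inv)
  have pair: "(mp + mm) * cross_loss (mp / (mp + mm)) c = mp * logloss c + mm * logloss (- c)" for c
  proof -
    have e: "(mp + mm) * (mp / (mp + mm)) = mp" "(mp + mm) * (1 - mp / (mp + mm)) = mm"
      using pos by (simp_all add: field_simps)
    have "(mp + mm) * cross_loss (mp / (mp + mm)) c
        = ((mp + mm) * (mp / (mp + mm))) * logloss c + ((mp + mm) * (1 - mp / (mp + mm))) * logloss (- c)"
      unfolding cross_loss_def by (simp only: distrib_left mult.assoc)
    then show ?thesis unfolding e .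
  qed
  from cube_memD[OF x u] consider "x u = 1" | "x u = -1" by blast
  then show "rbm_marg n m J h g x * logloss (x u * b x) + rbm_marg n m J h g (flip_at u x) * logloss (flip_at u x u * b (flip_at u x))
      = rbm_marg n m J h g x * cross_loss (rbm_cond n m J h g u x) (b x)
        + rbm_marg n m J h g (flip_at u x) * cross_loss (rbm_cond n m J h g u (flip_at u x)) (b (flip_at u x))"
  proof cases
    case 1
    then have "rbm_marg n m J h g x = mp" "rbm_marg n m J h g (flip_at u x) = mm" "flip_at u x u = -1"
      by (simp_all add: mp_def mm_def flip_at_def fun_upd_idem)
    then show ?thesis
      using 1 pair[of "b x"] unfolding cond b by (simp add: algebra_simps)
  next
    case 2
    then have "rbm_marg n m J h g x = mm" "rbm_marg n m J h g (flip_at u x) = mp" "flip_at u x u = 1"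
      by (simp_all add: mp_def mm_def flip_at_def fun_upd_idem)
    then show ?thesis
      using 2 pair[of "b x"] unfolding cond b by (simp add: algebra_simps)
  qed
qed

lemma excess_loss_ge_prediction_error:
  assumes u: "u < n" and N: "u \<notin> N"
  shows "2 * prediction_error n m J h g u N w
    \<le> expected_loss n m J h g u (feat_dot N w) - expected_loss n m J h g u (rbm_logit n m J h g u)"
proof -
  have "2 * prediction_error n m J h g u N w = (\<Sum>x\<in>cube n. rbm_marg n m J h g x *
      (2 * (sigmoid (rbm_logit n m J h g u x) - sigmoid (feat_dot N w x))\<^sup>2))"
    unfolding prediction_error_def
    by (simp add: sum_distrib_left rbm_cond_eq_sigmoid_logit[OF _ u] mult_ac cong: sum.cong)
  also have "\<dots> \<le> (\<Sum>x\<in>cube n. rbm_marg n m J h g x *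
      (cross_loss (sigmoid (rbm_logit n m J h g u x)) (feat_dot N w x)
        - cross_loss (sigmoid (rbm_logit n m J h g u x)) (rbm_logit n m J h g u x)))"
    by (intro sum_mono mult_left_mono cross_loss_excess_ge less_imp_le[OF rbm_marg_pos])
  also have "\<dots> = expected_loss n m J h g u (feat_dot N w) - expected_loss n m J h g u (rbm_logit n m J h g u)"
    using feat_dot_fun_upd[OF N] rbm_logit_fun_upd
    by (simp add: expected_loss_eq_cross_loss[OF u] rbm_cond_eq_sigmoid_logit[OF _ u]
        sum_subtractf right_diff_distrib cong: sum.cong)
  finally show ?thesis .
qed

lemma excess_loss_le:
  assumes u: "u < n" and inv: "\<And>x v. b (x(u := v)) = b x"
    and close: "\<And>x. x \<in> cube n \<Longrightarrow> \<bar>b x - rbm_logit n m J h g u x\<bar> \<le> B"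
  shows "expected_loss n m J h g u b - expected_loss n m J h g u (rbm_logit n m J h g u) \<le> B\<^sup>2 / 8"
proof -
  have "expected_loss n m J h g u b - expected_loss n m J h g u (rbm_logit n m J h g u)
      = (\<Sum>x\<in>cube n. rbm_marg n m J h g x *
          (cross_loss (sigmoid (rbm_logit n m J h g u x)) (b x)
            - cross_loss (sigmoid (rbm_logit n m J h g u x)) (rbm_logit n m J h g u x)))"
    using inv rbm_logit_fun_upd
    by (simp add: expected_loss_eq_cross_loss[OF u] rbm_cond_eq_sigmoid_logit[OF _ u]
        sum_subtractf right_diff_distrib cong: sum.cong)
  also have "\<dots> \<le> (\<Sum>x\<in>cube n. rbm_marg n m J h g x * (B\<^sup>2 / 8))"
  proof (intro sum_mono mult_left_mono less_imp_le[OF rbm_marg_pos])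
    fix x assume "x \<in> cube n"
    then have "\<bar>b x - rbm_logit n m J h g u x\<bar> \<le> \<bar>B\<bar>"
      using close abs_ge_self[of B] by (meson order_trans)
    then have "(b x - rbm_logit n m J h g u x)\<^sup>2 \<le> B\<^sup>2"
      by (simp add: abs_le_square_iff)
    then show "cross_loss (sigmoid (rbm_logit n m J h g u x)) (b x)
        - cross_loss (sigmoid (rbm_logit n m J h g u x)) (rbm_logit n m J h g u x) \<le> B\<^sup>2 / 8"
      using cross_loss_excess_le[of "rbm_logit n m J h g u x" "b x"] by simp
  qed
  also have "\<dots> = (\<Sum>x\<in>cube n. rbm_marg n m J h g x) * (B\<^sup>2 / 8)"
    by (rule sum_distrib_right[symmetric])
  also have "\<dots> = B\<^sup>2 / 8"
    using finite_prob.sum_prob[OF finite_prob_rbm_marg] by simp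
  finally show ?thesis .
qed

lemma threshold_square_le:
  fixes \<zeta> \<epsilon> \<gamma> c :: real
  assumes \<zeta>: "0 < \<zeta>" and \<epsilon>: "0 < \<epsilon>" and \<gamma>: "0 \<le> \<gamma>" and c: "0 \<le> c"
    and le: "\<zeta> \<le> sqrt \<epsilon> / (c * sqrt (1 + exp (2 * \<gamma>)))"
  shows "(\<zeta> * c)\<^sup>2 \<le> \<epsilon> / 2"
proof -
  have q: "0 < sqrt (1 + exp (2 * \<gamma>))" by (simp add: add_pos_pos)
  have "0 < c" using le \<zeta> c by (cases "c = 0") auto
  with le q have "\<zeta> * (c * sqrt (1 + exp (2 * \<gamma>))) \<le> sqrt \<epsilon>"
    by (simp add: field_simps)
  then have "(\<zeta> * (c * sqrt (1 + exp (2 * \<gamma>))))\<^sup>2 \<le> (sqrt \<epsilon>)\<^sup>2"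
    using \<zeta> \<open>0 < c\<close> q by (intro power_mono) auto
  then have "(\<zeta> * c)\<^sup>2 * (1 + exp (2 * \<gamma>)) \<le> \<epsilon>"
    using \<epsilon> by (simp add: power_mult_distrib add_pos_pos)
  moreover have "(\<zeta> * c)\<^sup>2 * 2 \<le> (\<zeta> * c)\<^sup>2 * (1 + exp (2 * \<gamma>))"
    using \<gamma> by (intro mult_left_mono) simp_all
  ultimately show ?thesis by simp
qed

lemma prediction_error_le_of_excess_loss:
  assumes u: "u < n" and N: "N \<subseteq> mrf_nbhd n m J h g u"
    and large: "\<forall>i. i < n \<and> i \<noteq> u \<and> (\<exists>T. T \<subseteq> {0..<n} \<and> u \<in> T \<and> i \<in> T \<and> \<bar>fhat n m J h g T\<bar> \<ge> \<zeta>)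
        \<longrightarrow> i \<in> N"
    and \<zeta>: "0 < \<zeta>" and \<epsilon>: "0 < \<epsilon>"
    and \<zeta>_le: "\<zeta> \<le> sqrt \<epsilon> / (real (rbm_D n m J h g) ^ rbm_d n m J * sqrt (1 + exp (2 * rbm_gamma n m J h g)))"
    and loss: "expected_loss n m J h g u (feat_dot N w)
      \<le> expected_loss n m J h g u (feat_dot N (logit_weight n m J h g u)) + t"
  shows "prediction_error n m J h g u N w \<le> (\<epsilon> / 4 + t) / 2"
proof -
  have N': "N \<subseteq> {0..<n}" "u \<notin> N" using N mrf_nbhd_subset not_mem_mrf_nbhd by blast+
  define B where "B = (\<Sum>T\<in>missing_sets n u N. \<bar>fhat n m J h g T\<bar>)"
  have B: "0 \<le> B" "B \<le> \<zeta> * rbm_D n m J h g ^ rbm_d n m J"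
    unfolding B_def using missing_mass_le[OF u N _ large] \<zeta> by (auto simp: sum_nonneg)
  have "B\<^sup>2 \<le> (\<zeta> * rbm_D n m J h g ^ rbm_d n m J)\<^sup>2"
    by (rule power_mono[OF B(2) B(1)])
  also have "\<dots> \<le> \<epsilon> / 2"
    using threshold_square_le[OF \<zeta> \<epsilon> rbm_gamma_nonneg _ \<zeta>_le] by simp
  finally have "(2 * B)\<^sup>2 / 8 \<le> \<epsilon> / 4"
    by (simp add: power_mult_distrib)
  moreover have "expected_loss n m J h g u (feat_dot N (logit_weight n m J h g u))
      - expected_loss n m J h g u (rbm_logit n m J h g u) \<le> (2 * B)\<^sup>2 / 8"
    using abs_rbm_logit_minus_feat_dot_le[OF u N'] feat_dot_fun_upd[OF N'(2)]
    by (intro excess_loss_le[OF u]) (auto simp: B_def abs_minus_commute)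
  ultimately show ?thesis
    using excess_loss_ge_prediction_error[OF u N'(2), of m J h g w] loss by simp
qed

lemma prediction_error_le_gamma_square:
  assumes u: "u < n" and w: "l1norm N w \<le> 2 * rbm_gamma n m J h g"
  shows "prediction_error n m J h g u N w \<le> (rbm_gamma n m J h g)\<^sup>2"
proof -
  have "prediction_error n m J h g u N w \<le> (\<Sum>x\<in>cube n. rbm_marg n m J h g x * (rbm_gamma n m J h g)\<^sup>2)"
    unfolding prediction_error_def
  proof (intro sum_mono mult_left_mono less_imp_le[OF rbm_marg_pos])
    fix x assume x: "x \<in> cube n"
    have "\<bar>rbm_cond n m J h g u x - sigmoid (feat_dot N w x)\<bar> \<le> \<bar>rbm_logit n m J h g u x - feat_dot N w x\<bar> / 4"
      unfolding rbm_cond_eq_sigmoid_logit[OF x u] by (rule sigmoid_lipschitz)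
    also have "\<dots> \<le> (2 * rbm_gamma n m J h g + 2 * rbm_gamma n m J h g) / 4"
      by (intro divide_right_mono order_trans[OF abs_triangle_ineq4] add_mono abs_rbm_logit_le[OF x u]
          order_trans[OF abs_feat_dot_le[OF x] w]) simp
    also have "\<dots> = rbm_gamma n m J h g"
      by simp
    finally have "\<bar>rbm_cond n m J h g u x - sigmoid (feat_dot N w x)\<bar> \<le> \<bar>rbm_gamma n m J h g\<bar>"
      by simp
    then show "(rbm_cond n m J h g u x - sigmoid (feat_dot N w x))\<^sup>2 \<le> (rbm_gamma n m J h g)\<^sup>2"
      by (simp add: abs_le_square_iff)
  qed
  also have "\<dots> = (\<Sum>x\<in>cube n. rbm_marg n m J h g x) * (rbm_gamma n m J h g)\<^sup>2"
    by (rule sum_distrib_right[symmetric])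
  also have "\<dots> = (rbm_gamma n m J h g)\<^sup>2"
    using finite_prob.sum_prob[OF finite_prob_rbm_marg] by simp
  finally show ?thesis .
qed

section \<open>Uniform convergence of the empirical logistic loss\<close>

lemma deviation_tail:
  fixes Ws :: "(nat set \<Rightarrow> real) set" and sg :: real
  assumes u: "u < n" and M: "0 < M" and Ws: "finite Ws" "Ws \<noteq> {}"
    and R: "\<And>w. w \<in> Ws \<Longrightarrow> l1norm N w \<le> R" and R_pos: "0 < R" and t: "0 \<le> t" and N: "finite N"
    and sg: "sg = 1 \<or> sg = -1"
  shows "(\<Sum>s\<in>samples M (cube n). sample_prob (rbm_marg n m J h g) M s *
           (if \<exists>w\<in>Ws. t \<le> sg * (expected_loss n m J h g u (feat_dot N w) - logistic_loss M s u N w)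
            then 1 else 0))
     \<le> 2 * 2 ^ card N * exp (- (t\<^sup>2 * M / (8 * R\<^sup>2)))"
proof -
  interpret finite_prob "cube n" "rbm_marg n m J h g"
    by (rule finite_prob_rbm_marg)
  define \<phi> where "\<phi> x v = sg * (logloss (x u * v) - ln 2)" for x :: "nat \<Rightarrow> real" and v
  have lip: "\<bar>\<phi> x a - \<phi> x b\<bar> \<le> \<bar>a - b\<bar>" if x: "x \<in> cube n" for x a b
  proof -
    have "\<bar>\<phi> x a - \<phi> x b\<bar> = \<bar>logloss (x u * a) - logloss (x u * b)\<bar>"
      using sg by (auto simp: \<phi>_def algebra_simps)
    also have "\<dots> \<le> \<bar>x u * a - x u * b\<bar>"
      by (rule logloss_lipschitz)
    also have "\<dots> = \<bar>a - b\<bar>"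
      using cube_memD[OF x u] by (auto simp: algebra_simps)
    finally show ?thesis .
  qed
  have expected: "(\<Sum>x\<in>cube n. rbm_marg n m J h g x * \<phi> x (\<Sum>T\<in>Pow N. w T * chi T x))
      = sg * (expected_loss n m J h g u (feat_dot N w) - ln 2)" for w
  proof -
    have "(\<Sum>x\<in>cube n. rbm_marg n m J h g x * \<phi> x (\<Sum>T\<in>Pow N. w T * chi T x))
        = sg * ((\<Sum>x\<in>cube n. rbm_marg n m J h g x * logloss (x u * feat_dot N w x))
          - (\<Sum>x\<in>cube n. rbm_marg n m J h g x) * ln 2)"
      by (simp add: \<phi>_def feat_dot_def sum_distrib_left sum_distrib_right sum_subtractf algebra_simps)
    then show ?thesis using sum_prob by (simp add: expected_loss_def)
  qed
  have empirical: "(1 / real M) * (\<Sum>k<M. \<phi> (s k) (\<Sum>T\<in>Pow N. w T * chi T (s k)))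
      = sg * (logistic_loss M s u N w - ln 2)" for s w
    using M by (simp add: \<phi>_def logistic_loss_def logloss_def feat_dot_def sum_subtractf
        sum_distrib_left right_diff_distrib mult_ac)
  have "(\<Sum>s\<in>samples M (cube n). sample_prob (rbm_marg n m J h g) M s *
      (if \<exists>w\<in>Ws. t \<le> (\<Sum>x\<in>cube n. rbm_marg n m J h g x * \<phi> x (\<Sum>T\<in>Pow N. w T * chi T x))
          - (1 / real M) * (\<Sum>k<M. \<phi> (s k) (\<Sum>T\<in>Pow N. w T * chi T (s k))) then 1 else 0))
      \<le> 2 * card (Pow N) * exp (- (t\<^sup>2 * M / (8 * R\<^sup>2)))"
    by (rule uniform_deviation_tail[OF Ws M _ _ _ _ R_pos lip _ t])
       (use N R abs_chi_le_1 in \<open>auto simp: l1norm_def \<phi>_def logloss_0\<close>)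
  from this[unfolded expected empirical] show ?thesis
    using N by (simp add: card_Pow algebra_simps)
qed

lemma sum_prob_ge_union_bound:
  fixes q :: "'s \<Rightarrow> real"
  assumes I: "finite I" and q: "\<And>s. s \<in> S \<Longrightarrow> 0 \<le> q s" "sum q S = 1"
    and good: "\<And>s. s \<in> S \<Longrightarrow> (\<forall>i\<in>I. \<not> bad i s) \<Longrightarrow> good s"
  shows "1 - (\<Sum>i\<in>I. \<Sum>s\<in>S. q s * (if bad i s then 1 else 0)) \<le> (\<Sum>s\<in>S. q s * (if good s then 1 else 0))"
proof -
  have "1 - (\<Sum>i\<in>I. if bad i s then 1 else 0) \<le> (if good s then 1 else (0::real))" if "s \<in> S" for s
  proof (cases "\<exists>i\<in>I. bad i s")
    case True
    then obtain i where "i \<in> I" "bad i s" by blast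
    then have "1 \<le> (\<Sum>i\<in>I. if bad i s then 1 else (0::real))"
      using member_le_sum[of i I "\<lambda>i. if bad i s then 1 else (0::real)"] I by auto
    then show ?thesis by simp
  next
    case False
    then show ?thesis using good[OF that] by simp
  qed
  then have "(\<Sum>s\<in>S. q s * (1 - (\<Sum>i\<in>I. if bad i s then 1 else 0))) \<le> (\<Sum>s\<in>S. q s * (if good s then 1 else 0))"
    using q by (intro sum_mono mult_left_mono) auto
  moreover have "(\<Sum>s\<in>S. q s * (1 - (\<Sum>i\<in>I. if bad i s then 1 else 0)))
      = 1 - (\<Sum>i\<in>I. \<Sum>s\<in>S. q s * (if bad i s then 1 else 0))"
    using q by (simp add: right_diff_distrib sum_subtractf sum_distrib_left sum.swap[of _ I])
  ultimately show ?thesis by simp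
qed

lemma exp_tail_le_of_sample_size:
  fixes \<gamma> \<epsilon> K :: real
  assumes \<gamma>: "0 < \<gamma>" and \<epsilon>: "0 < \<epsilon>" and K: "1 < K" and M: "128 * \<gamma>\<^sup>2 * ln K / \<epsilon>\<^sup>2 \<le> M"
  shows "exp (- ((\<epsilon> / 2)\<^sup>2 * M / (8 * (2 * \<gamma>)\<^sup>2))) \<le> 1 / K"
proof -
  have "128 * \<gamma>\<^sup>2 * ln K \<le> \<epsilon>\<^sup>2 * M"
    using M \<epsilon> by (simp add: field_simps)
  then have "ln K \<le> (\<epsilon> / 2)\<^sup>2 * M / (8 * (2 * \<gamma>)\<^sup>2)"
    using \<gamma> by (simp add: field_simps power2_eq_square)
  then have "exp (- ((\<epsilon> / 2)\<^sup>2 * M / (8 * (2 * \<gamma>)\<^sup>2))) \<le> exp (- ln K)"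
    by simp
  also have "\<dots> = 1 / K"
    using K by (simp add: exp_minus inverse_eq_divide)
  finally show ?thesis .
qed

section \<open>The sample complexity bound\<close>

lemma prediction_error_le_of_small_deviation:
  assumes u: "u < n" and N: "N \<subseteq> mrf_nbhd n m J h g u"
    and large: "\<forall>i. i < n \<and> i \<noteq> u \<and> (\<exists>T. T \<subseteq> {0..<n} \<and> u \<in> T \<and> i \<in> T \<and> \<bar>fhat n m J h g T\<bar> \<ge> \<zeta>)
        \<longrightarrow> i \<in> N"
    and \<zeta>: "0 < \<zeta>" and \<epsilon>: "0 < \<epsilon>"
    and \<zeta>_le: "\<zeta> \<le> sqrt \<epsilon> / (real (rbm_D n m J h g) ^ rbm_d n m J * sqrt (1 + exp (2 * rbm_gamma n m J h g)))"
    and min: "\<forall>w. l1norm N w \<le> 2 * rbm_gamma n m J h g \<longrightarrow> logistic_loss M s u N w' \<le> logistic_loss M s u N w"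
    and dev1: "\<bar>expected_loss n m J h g u (feat_dot N w') - logistic_loss M s u N w'\<bar> < \<epsilon> / 2"
    and dev2: "\<bar>expected_loss n m J h g u (feat_dot N (logit_weight n m J h g u))
      - logistic_loss M s u N (logit_weight n m J h g u)\<bar> < \<epsilon> / 2"
  shows "prediction_error n m J h g u N w' \<le> \<epsilon>"
proof -
  have "N \<subseteq> {0..<n}" "u \<notin> N"
    using N mrf_nbhd_subset not_mem_mrf_nbhd by blast+
  then have "l1norm N (logit_weight n m J h g u) \<le> 2 * rbm_gamma n m J h g"
    by (rule l1norm_logit_weight_le[OF u])
  with min have "logistic_loss M s u N w' \<le> logistic_loss M s u N (logit_weight n m J h g u)"
    by blast
  with dev1 dev2 have "expected_loss n m J h g u (feat_dot N w')
      \<le> expected_loss n m J h g u (feat_dot N (logit_weight n m J h g u)) + \<epsilon>"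
    unfolding abs_less_iff by linarith
  from prediction_error_le_of_excess_loss[OF u N large \<zeta> \<epsilon> \<zeta>_le this]
  show ?thesis using \<epsilon> by simp
qed

lemma deviation_prob_le:
  assumes u: "u < n" and N: "N \<subseteq> mrf_nbhd n m J h g u"
    and Ws: "finite Ws" "Ws \<noteq> {}" "\<And>w. w \<in> Ws \<Longrightarrow> l1norm N w \<le> 2 * rbm_gamma n m J h g"
    and \<gamma>: "0 < rbm_gamma n m J h g" and \<epsilon>: "0 < \<epsilon>" and \<delta>: "0 < \<delta>" "\<delta> < 1"
    and M: "128 * (rbm_gamma n m J h g)\<^sup>2 * ln (8 * real n * 2 ^ rbm_D n m J h g / \<delta>) / \<epsilon>\<^sup>2 \<le> M"
    and sg: "sg = 1 \<or> sg = -1"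
  shows "(\<Sum>s\<in>samples M (cube n). sample_prob (rbm_marg n m J h g) M s *
           (if \<exists>w\<in>Ws. \<epsilon> / 2 \<le> sg * (expected_loss n m J h g u (feat_dot N w) - logistic_loss M s u N w)
            then 1 else 0))
     \<le> \<delta> / (4 * n)"
proof -
  define K where "K = 8 * real n * 2 ^ rbm_D n m J h g / \<delta>"
  have "1 \<le> real n" "(1::real) \<le> 2 ^ rbm_D n m J h g" using u by simp_all
  then have "1 \<le> real n * 2 ^ rbm_D n m J h g"
    using mult_mono[of 1 "real n" 1 "2 ^ rbm_D n m J h g"] by simp
  then have K: "1 < K" using \<delta> by (simp add: K_def)
  have "0 < 128 * (rbm_gamma n m J h g)\<^sup>2 * ln K / \<epsilon>\<^sup>2"
    using K \<gamma> \<epsilon> by (intro divide_pos_pos mult_pos_pos) simp_all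
  then have "0 < M" using M by (simp add: K_def)
  have fin: "finite N" using N mrf_nbhd_subset by (rule finite_subset[OF subset_trans]) simp
  have "card N \<le> rbm_D n m J h g"
    using card_mono[OF finite_subset[OF mrf_nbhd_subset] N] card_mrf_nbhd_le[OF u, of m J h g] by simp
  then have "2 * 2 ^ card N \<le> 2 * (2::real) ^ rbm_D n m J h g" by simp
  moreover have "exp (- ((\<epsilon> / 2)\<^sup>2 * M / (8 * (2 * rbm_gamma n m J h g)\<^sup>2))) \<le> 1 / K"
    using exp_tail_le_of_sample_size[OF \<gamma> \<epsilon> K] M by (simp add: K_def)
  ultimately have "2 * 2 ^ card N * exp (- ((\<epsilon> / 2)\<^sup>2 * M / (8 * (2 * rbm_gamma n m J h g)\<^sup>2)))
      \<le> 2 * 2 ^ rbm_D n m J h g * (1 / K)"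
    by (intro mult_mono) auto
  also have "\<dots> = \<delta> / (4 * real n)" using u by (simp add: K_def)
  finally have bound: "2 * 2 ^ card N * exp (- ((\<epsilon> / 2)\<^sup>2 * M / (8 * (2 * rbm_gamma n m J h g)\<^sup>2)))
      \<le> \<delta> / (4 * real n)" .
  have "(\<Sum>s\<in>samples M (cube n). sample_prob (rbm_marg n m J h g) M s *
           (if \<exists>w\<in>Ws. \<epsilon> / 2 \<le> sg * (expected_loss n m J h g u (feat_dot N w) - logistic_loss M s u N w)
            then 1 else 0))
     \<le> 2 * 2 ^ card N * exp (- ((\<epsilon> / 2)\<^sup>2 * M / (8 * (2 * rbm_gamma n m J h g)\<^sup>2)))"
    by (rule deviation_tail[OF u \<open>0 < M\<close> Ws _ _ fin sg]) (use \<gamma> \<epsilon> in auto)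
  with bound show ?thesis by linarith
qed

lemma prob_no_deviation_ge:
  fixes n m M :: nat and J :: "nat \<Rightarrow> nat \<Rightarrow> real" and h g :: "nat \<Rightarrow> real"
    and W :: "(nat \<Rightarrow> nat \<Rightarrow> real) \<Rightarrow> nat \<Rightarrow> nat set \<Rightarrow> real"
  defines "Ws u \<equiv> (\<lambda>s. W s u) ` samples M (cube n) \<union> {logit_weight n m J h g u}"
  assumes N: "\<And>u. u < n \<Longrightarrow> N u \<subseteq> mrf_nbhd n m J h g u"
    and W: "\<And>s u. s \<in> samples M (cube n) \<Longrightarrow> u < n \<Longrightarrow> l1norm (N u) (W s u) \<le> 2 * rbm_gamma n m J h g"
    and \<gamma>: "0 < rbm_gamma n m J h g" and \<epsilon>: "0 < \<epsilon>" and \<delta>: "0 < \<delta>" "\<delta> < 1"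
    and M: "128 * (rbm_gamma n m J h g)\<^sup>2 * ln (8 * real n * 2 ^ rbm_D n m J h g / \<delta>) / \<epsilon>\<^sup>2 \<le> M"
  shows "1 - \<delta> \<le> (\<Sum>s\<in>samples M (cube n). sample_prob (rbm_marg n m J h g) M s *
    (if \<forall>u<n. \<forall>w\<in>Ws u. \<bar>expected_loss n m J h g u (feat_dot (N u) w) - logistic_loss M s u (N u) w\<bar> < \<epsilon> / 2
     then 1 else 0))"
    (is "_ \<le> (\<Sum>s\<in>?S. ?q s * (if ?close s then 1 else 0))")
proof -
  interpret finite_prob "cube n" "rbm_marg n m J h g"
    by (rule finite_prob_rbm_marg)
  define bad where "bad = (\<lambda>(u, sg) s. \<exists>w\<in>Ws u.
    \<epsilon> / 2 \<le> sg * (expected_loss n m J h g u (feat_dot (N u) w) - logistic_loss M s u (N u) w))"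
  have Ws: "finite (Ws u)" "Ws u \<noteq> {}" for u
    unfolding Ws_def using finite_samples[of M] by simp_all
  have Ws_l1norm: "l1norm (N u) w \<le> 2 * rbm_gamma n m J h g" if u: "u < n" and "w \<in> Ws u" for u w
  proof -
    have "N u \<subseteq> {0..<n}" "u \<notin> N u" using N[OF u] mrf_nbhd_subset not_mem_mrf_nbhd by blast+
    then show ?thesis using \<open>w \<in> Ws u\<close> W[OF _ u] l1norm_logit_weight_le[OF u] by (auto simp: Ws_def)
  qed
  have "(\<Sum>s\<in>?S. ?q s * (if bad (u, sg) s then 1 else 0)) \<le> \<delta> / (4 * real n)"
    if u: "u < n" and sg: "sg = 1 \<or> sg = -1" for u sg
    unfolding bad_def split_conv by (rule deviation_prob_le[OF u N[OF u] Ws Ws_l1norm[OF u] \<gamma> \<epsilon> \<delta> M sg])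
  then have "(\<Sum>i\<in>{..<n} \<times> {1, -1}. \<Sum>s\<in>?S. ?q s * (if bad i s then 1 else 0))
      \<le> (\<Sum>i\<in>{..<n} \<times> {1, -1::real}. \<delta> / (4 * real n))"
    by (intro sum_mono) auto
  also have "\<dots> \<le> \<delta>"
    using \<delta> by (simp add: card_cartesian_product)
  moreover have "1 - (\<Sum>i\<in>{..<n} \<times> {1, -1}. \<Sum>s\<in>?S. ?q s * (if bad i s then 1 else 0))
      \<le> (\<Sum>s\<in>?S. ?q s * (if ?close s then 1 else 0))"
  proof (rule sum_prob_ge_union_bound)
    fix s assume no_bad: "\<forall>i\<in>{..<n} \<times> {1, -1}. \<not> bad i s"
    show "?close s"
    proof (intro allI impI ballI)
      fix u w assume "u < n" "w \<in> Ws u"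
      with no_bad have "\<not> bad (u, 1) s" "\<not> bad (u, -1) s" by auto
      with \<open>w \<in> Ws u\<close> have
        "\<not> \<epsilon> / 2 \<le> expected_loss n m J h g u (feat_dot (N u) w) - logistic_loss M s u (N u) w"
        "\<not> \<epsilon> / 2 \<le> - (expected_loss n m J h g u (feat_dot (N u) w) - logistic_loss M s u (N u) w)"
        unfolding bad_def by auto
      then show "\<bar>expected_loss n m J h g u (feat_dot (N u) w) - logistic_loss M s u (N u) w\<bar> < \<epsilon> / 2"
        by (subst abs_less_iff) (intro conjI; linarith)
    qed
  qed (auto simp: sample_prob_nonneg sum_sample_prob)
  ultimately show ?thesis by linarith
qed

lemma rbm_regression_guarantee:
  fixes n m :: nat and J :: "nat \<Rightarrow> nat \<Rightarrow> real" and h g :: "nat \<Rightarrow> real"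
    and \<delta> \<epsilon> \<zeta> :: real and N :: "nat \<Rightarrow> nat set" and M :: nat
    and W :: "(nat \<Rightarrow> nat \<Rightarrow> real) \<Rightarrow> nat \<Rightarrow> nat set \<Rightarrow> real"
  assumes \<delta>: "0 < \<delta>" and \<epsilon>: "0 < \<epsilon>" and \<zeta>: "0 < \<zeta>"
    and hN: "\<forall>u<n. N u \<subseteq> mrf_nbhd n m J h g u \<and>
        (\<forall>i. i < n \<and> i \<noteq> u \<and> (\<exists>T. T \<subseteq> {0..<n} \<and> u \<in> T \<and> i \<in> T \<and> \<bar>fhat n m J h g T\<bar> \<ge> \<zeta>)
          \<longrightarrow> i \<in> N u)"
    and hW: "\<forall>s\<in>samples M (cube n). \<forall>u<n.
        l1norm (N u) (W s u) \<le> 2 * rbm_gamma n m J h g \<and>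
        (\<forall>w. l1norm (N u) w \<le> 2 * rbm_gamma n m J h g \<longrightarrow>
          logistic_loss M s u (N u) (W s u) \<le> logistic_loss M s u (N u) w)"
    and hM: "128 * (rbm_gamma n m J h g)\<^sup>2 * ln (8 * real n * 2 ^ rbm_D n m J h g / \<delta>) / \<epsilon>\<^sup>2 \<le> real M"
    and h\<zeta>: "\<zeta> \<le> sqrt \<epsilon> / (real (rbm_D n m J h g) ^ rbm_d n m J * sqrt (1 + exp (2 * rbm_gamma n m J h g)))"
  shows "1 - \<delta> \<le> (\<Sum>s\<in>samples M (cube n). sample_prob (rbm_marg n m J h g) M s *
    (if \<forall>u<n. prediction_error n m J h g u (N u) (W s u) \<le> \<epsilon> then 1 else 0))"
    (is "_ \<le> (\<Sum>s\<in>?S. ?q s * (if ?good s then 1 else 0))")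
proof -
  interpret finite_prob "cube n" "rbm_marg n m J h g"
    by (rule finite_prob_rbm_marg)
  have N: "N u \<subseteq> mrf_nbhd n m J h g u"
    and large: "\<forall>i. i < n \<and> i \<noteq> u \<and> (\<exists>T. T \<subseteq> {0..<n} \<and> u \<in> T \<and> i \<in> T \<and> \<bar>fhat n m J h g T\<bar> \<ge> \<zeta>)
        \<longrightarrow> i \<in> N u" if "u < n" for u
    using hN[rule_format, OF that] by (rule conjunct1, rule conjunct2)
  have W: "l1norm (N u) (W s u) \<le> 2 * rbm_gamma n m J h g"
    and min: "\<forall>w. l1norm (N u) w \<le> 2 * rbm_gamma n m J h g \<longrightarrow>
        logistic_loss M s u (N u) (W s u) \<le> logistic_loss M s u (N u) w" if "s \<in> ?S" "u < n" for s u
    using hW[rule_format, OF that] by (rule conjunct1, rule conjunct2)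
  consider "1 \<le> \<delta>" | "n = 0 \<or> (rbm_gamma n m J h g)\<^sup>2 \<le> \<epsilon>"
    | "\<delta> < 1" "0 < n" "\<epsilon> < (rbm_gamma n m J h g)\<^sup>2"
    by (meson neq0_conv not_le)
  then show ?thesis
  proof cases
    case 1
    have "0 \<le> (\<Sum>s\<in>?S. ?q s * (if ?good s then 1 else 0))"
      by (intro sum_nonneg mult_nonneg_nonneg sample_prob_nonneg) auto
    then show ?thesis using 1 by linarith
  next
    case 2
    have "?good s" if s: "s \<in> ?S" for s
      using 2 prediction_error_le_gamma_square[OF _ W[OF s]] by force
    then show ?thesis using \<delta> by (simp add: sum_sample_prob cong: sum.cong)
  next
    case 3
    have \<gamma>: "0 < rbm_gamma n m J h g"
      using 3 \<epsilon> rbm_gamma_nonneg[of n m J h g] by (cases "rbm_gamma n m J h g = 0") auto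
    let ?Ws = "\<lambda>u. (\<lambda>s. W s u) ` ?S \<union> {logit_weight n m J h g u}"
    let ?close = "\<lambda>s. \<forall>u<n. \<forall>w\<in>?Ws u.
      \<bar>expected_loss n m J h g u (feat_dot (N u) w) - logistic_loss M s u (N u) w\<bar> < \<epsilon> / 2"
    have "?good s" if s: "s \<in> ?S" and close: "?close s" for s
    proof (intro allI impI)
      fix u assume u: "u < n"
      have "W s u \<in> ?Ws u" "logit_weight n m J h g u \<in> ?Ws u" using s by auto
      with close u show "prediction_error n m J h g u (N u) (W s u) \<le> \<epsilon>"
        by (intro prediction_error_le_of_small_deviation[OF u N[OF u] large[OF u] \<zeta> \<epsilon> h\<zeta> min[OF s u]])
          blast+
    qed
    then have "(\<Sum>s\<in>?S. ?q s * (if ?close s then 1 else 0)) \<le> (\<Sum>s\<in>?S. ?q s * (if ?good s then 1 else 0))"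
      by (intro sum_mono mult_left_mono sample_prob_nonneg) auto
    moreover have "1 - \<delta> \<le> (\<Sum>s\<in>?S. ?q s * (if ?close s then 1 else 0))"
      using N W by (intro prob_no_deviation_ge \<gamma> \<epsilon> \<delta> 3(1) hM) auto
    ultimately show ?thesis by linarith
  qed
qed

theorem theorem6:
  "\<exists>C::real. C > 0 \<and>
    (\<forall>(n::nat) (m::nat) (J::nat \<Rightarrow> nat \<Rightarrow> real) (h::nat \<Rightarrow> real) (g::nat \<Rightarrow> real)
       (\<delta>::real) (\<epsilon>::real) (\<zeta>::real) (N::nat \<Rightarrow> nat set) (M::nat)
       (W::(nat \<Rightarrow> nat \<Rightarrow> real) \<Rightarrow> nat \<Rightarrow> nat set \<Rightarrow> real).
     \<delta> > 0 \<longrightarrow> \<epsilon> > 0 \<longrightarrow> \<zeta> > 0 \<longrightarrow>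
     (\<forall>u<n. N u \<subseteq> mrf_nbhd n m J h g u \<and>
        (\<forall>i. i < n \<and> i \<noteq> u \<and>
           (\<exists>T. T \<subseteq> {0..<n} \<and> u \<in> T \<and> i \<in> T \<and> \<bar>fhat n m J h g T\<bar> \<ge> \<zeta>)
           \<longrightarrow> i \<in> N u)) \<longrightarrow>
     (\<forall>s\<in>PiE {..<M} (\<lambda>_. cube n). \<forall>u<n.
        l1norm (N u) (W s u) \<le> 2 * rbm_gamma n m J h g \<and>
        (\<forall>w. l1norm (N u) w \<le> 2 * rbm_gamma n m J h g \<longrightarrow>
             logistic_loss M s u (N u) (W s u) \<le> logistic_loss M s u (N u) w)) \<longrightarrow>
     real M \<ge> C * (rbm_gamma n m J h g)\<^sup>2
                * ln (8 * real n * 2 ^ rbm_D n m J h g / \<delta>) / \<epsilon>\<^sup>2 \<longrightarrow>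
     \<zeta> \<le> sqrt \<epsilon> / (real (rbm_D n m J h g) ^ rbm_d n m J
                   * sqrt (1 + exp (2 * rbm_gamma n m J h g))) \<longrightarrow>
     (\<Sum>s\<in>PiE {..<M} (\<lambda>_. cube n).
        (\<Prod>k<M. rbm_marg n m J h g (s k)) *
        (if (\<forall>u<n. (\<Sum>x\<in>cube n. rbm_marg n m J h g x *
                (rbm_cond n m J h g u x - sigmoid (feat_dot (N u) (W s u) x))\<^sup>2) \<le> \<epsilon>)
         then 1 else 0)) \<ge> 1 - \<delta>)"
  by (intro exI[of _ 128] conjI allI impI, simp)
     (rule rbm_regression_guarantee[unfolded sample_prob_def prediction_error_def]; assumption)


end
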